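(* Let $\alpha\in(0,1)$, $\theta=\alpha/2$, and let $0=t_0<t_1<\cdots<t_N=T$ be a time mesh with steps $\tau_k=t_k-t_{k-1}$ and step ratios $r_k=\tau_k/\tau_{k-1}$ satisfying $r_k\ge r_\star(\alpha)$ for all $k\ge2$, where $r_\star(\alpha)$ is the unique positive root $r$ of $$2\sqrt{\frac{2(1-\alpha/2)r}{1+\alpha+(1-\alpha/2)r}+\frac{r}{1+r}}+3-\frac{1}{r^2(1+r)}=0.$$ Then for every real sequence $v^0,\dots,v^N$ and every $1\le n\le N$, $$2(\nabla_\tau v^n)(\partial^\alpha_\tau v)^{n-\theta}=\mathcal G_n[\nabla_\tau v]-\mathcal G_{n-1}[\nabla_\tau v]+\mathcal R_n[\nabla_\tau v]+\frac{2\alpha a^{(n)}_0}{2-\alpha}(\nabla_\tau v^n)^2,$$ where the functionals $\mathcal G_n,\mathcal R_n$ (defined in the context) are nonnegative.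
   Context: Notation: $\nabla_\tau v^k:=v^k-v^{k-1}$; $\omega_\beta(t):=t^{\beta-1}/\Gamma(\beta)$; $t_{n-\theta}:=\theta t_{n-1}+(1-\theta)t_n$; $\varpi_n'(t):=\omega_{1-\alpha}(t_{n-\theta}-t)$. For $1\le k\le n$: $$a^{(n)}_{n-k}:=\frac{1}{\tau_k}\int_{t_{k-1}}^{\min\{t_k,t_{n-\theta}\}}\varpi_n'(s)\,ds,\qquad \zeta^{(n)}_{n-k}:=\frac{2}{\tau_k^2}\int_{t_{k-1}}^{t_k}\Big(s-\tfrac{t_{k-1}+t_k}{2}\Big)\varpi_n'(s)\,ds.$$ The variable-step L2-$1_\sigma$ approximation of the Caputo derivative is $$(\partial^\alpha_\tau v)^{n-\theta}:=a^{(n)}_0\nabla_\tau v^n+\sum_{k=1}^{n-1}\Big(a^{(n)}_{n-k}\nabla_\tau v^k+\frac{\nabla_\tau v^{k+1}-r_{k+1}\nabla_\tau v^k}{r_{k+1}(1+r_{k+1})}\zeta^{(n)}_{n-k}\Big).$$ Kernels: $\hat a^{(1)}_0:=\frac{2(1-\alpha)}{2-\alpha}a^{(1)}_0$; for $n\ge2$: $\hat a^{(n)}_0:=\frac{2(1-\alpha)}{2-\alpha}a^{(n)}_0+\frac{\zeta^{(n)}_1}{r_n(1+r_n)}$, $\hat a^{(n)}_{n-k}:=a^{(n)}_{n-k}+\frac{\zeta^{(n)}_{n-k+1}}{r_k(1+r_k)}-\frac{\zeta^{(n)}_{n-k}}{1+r_{k+1}}$ for $2\le k\le n-1$, $\hat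 a^{(n)}_{n-1}:=a^{(n)}_{n-1}-\frac{\zeta^{(n)}_{n-1}}{1+r_2}$. Set $A^{(n)}_0:=2\hat a^{(n)}_0$ and $A^{(n)}_{n-k}:=\hat a^{(n)}_{n-k}$ for $1\le k\le n-1$. For a sequence $w=(w^1,w^2,\dots)$ and $m\ge1$: $$\mathcal G_m[w]:=\sum_{j=1}^{m-1}\big(A^{(m)}_{m-j-1}-A^{(m)}_{m-j}\big)\Big(\sum_{\ell=j+1}^m w^\ell\Big)^2+A^{(m)}_{m-1}\Big(\sum_{\ell=1}^m w^\ell\Big)^2,\qquad \mathcal G_0[w]:=0,$$ $$\mathcal R_m[w]:=\sum_{j=1}^{m-1}\big(A^{(m-1)}_{m-j-2}-A^{(m-1)}_{m-j-1}-A^{(m)}_{m-j-1}+A^{(m)}_{m-j}\big)\Big(\sum_{\ell=j+1}^{m-1}w^\ell\Big)^2+\big(A^{(m-1)}_{m-2}-A^{(m)}_{m-1}\big)\Big(\sum_{\ell=1}^{m-1}w^\ell\Big)^2$$ for $m\ge2$, and $\mathcal R_1[w]:=0$ (empty sums vanish). Here $\nabla_\tau v$ denotes the sequence $(\nabla_\tau v^1,\nabla_\tau v^2,\dots)$. *)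

theory Defs
  imports "HOL-Analysis.Analysis"
begin

text \<open>Variable-step L2-1_sigma scheme. The mesh is t :: nat => real, with t 0 = 0 < t 1 < ... < t N.
  Kernel subscripts follow the paper: a n j stands for a^{(n)}_j, where j = n - k.\<close>

definition omega :: "real \<Rightarrow> real \<Rightarrow> real" where
  "omega \<beta> x = x powr (\<beta> - 1) / Gamma \<beta>"

definition tau :: "(nat \<Rightarrow> real) \<Rightarrow> nat \<Rightarrow> real" where
  "tau t k = t k - t (k - 1)"

definition ratio :: "(nat \<Rightarrow> real) \<Rightarrow> nat \<Rightarrow> real" where
  "ratio t k = tau t k / tau t (k - 1)"

definition nabla :: "(nat \<Rightarrow> real) \<Rightarrow> nat \<Rightarrow> real" where
  "nabla v k = v k - v (k - 1)"

definition tth :: "real \<Rightarrow> (nat \<Rightarrow> real) \<Rightarrow> nat \<Rightarrow> real" where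
  "tth \<alpha> t n = (\<alpha>/2) * t (n - 1) + (1 - \<alpha>/2) * t n"

definition varpi' :: "real \<Rightarrow> (nat \<Rightarrow> real) \<Rightarrow> nat \<Rightarrow> real \<Rightarrow> real" where
  "varpi' \<alpha> t n s = omega (1 - \<alpha>) (tth \<alpha> t n - s)"

definition acoef :: "real \<Rightarrow> (nat \<Rightarrow> real) \<Rightarrow> nat \<Rightarrow> nat \<Rightarrow> real" where
  "acoef \<alpha> t n j = (let k = n - j in
     (1 / tau t k) * integral {t (k - 1) .. min (t k) (tth \<alpha> t n)} (varpi' \<alpha> t n))"

definition zeta :: "real \<Rightarrow> (nat \<Rightarrow> real) \<Rightarrow> nat \<Rightarrow> nat \<Rightarrow> real" where
  "zeta \<alpha> t n j = (let k = n - j in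
     (2 / (tau t k)^2) * integral {t (k - 1) .. t k}
        (\<lambda>s. (s - (t (k - 1) + t k) / 2) * varpi' \<alpha> t n s))"

definition caputoL21 :: "real \<Rightarrow> (nat \<Rightarrow> real) \<Rightarrow> (nat \<Rightarrow> real) \<Rightarrow> nat \<Rightarrow> real" where
  "caputoL21 \<alpha> t v n =
     acoef \<alpha> t n 0 * nabla v n +
     (\<Sum>k = 1..n - 1. acoef \<alpha> t n (n - k) * nabla v k +
        (nabla v (k + 1) - ratio t (k + 1) * nabla v k)
          / (ratio t (k + 1) * (1 + ratio t (k + 1))) * zeta \<alpha> t n (n - k))"

definition ahat :: "real \<Rightarrow> (nat \<Rightarrow> real) \<Rightarrow> nat \<Rightarrow> nat \<Rightarrow> real" where
  "ahat \<alpha> t n j =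
     (if j = 0 then
        2 * (1 - \<alpha>) / (2 - \<alpha>) * acoef \<alpha> t n 0
        + (if n \<ge> 2 then zeta \<alpha> t n 1 / (ratio t n * (1 + ratio t n)) else 0)
      else if j = n - 1 then
        acoef \<alpha> t n (n - 1) - zeta \<alpha> t n (n - 1) / (1 + ratio t 2)
      else
        acoef \<alpha> t n j
        + zeta \<alpha> t n (j + 1) / (ratio t (n - j) * (1 + ratio t (n - j)))
        - zeta \<alpha> t n j / (1 + ratio t (n - j + 1)))"

definition Akern :: "real \<Rightarrow> (nat \<Rightarrow> real) \<Rightarrow> nat \<Rightarrow> nat \<Rightarrow> real" where
  "Akern \<alpha> t n j = (if j = 0 then 2 * ahat \<alpha> t n 0 else ahat \<alpha> t n j)"

definition Gfun :: "real \<Rightarrow> (nat \<Rightarrow> real) \<Rightarrow> nat \<Rightarrow> (nat \<Rightarrow> real) \<Rightarrow> real" where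
  "Gfun \<alpha> t m w =
     (if m = 0 then 0 else
       (\<Sum>j = 1..m - 1. (Akern \<alpha> t m (m - j - 1) - Akern \<alpha> t m (m - j))
            * (\<Sum>l = j + 1..m. w l)^2)
       + Akern \<alpha> t m (m - 1) * (\<Sum>l = 1..m. w l)^2)"

text \<open>For j = m-1 the inner sum is empty, so the (nat-truncated) index m-j-2 there is irrelevant.\<close>
definition Rfun :: "real \<Rightarrow> (nat \<Rightarrow> real) \<Rightarrow> nat \<Rightarrow> (nat \<Rightarrow> real) \<Rightarrow> real" where
  "Rfun \<alpha> t m w =
     (if m \<le> 1 then 0 else
       (\<Sum>j = 1..m - 1. (Akern \<alpha> t (m - 1) (m - j - 2) - Akern \<alpha> t (m - 1) (m - j - 1)
                         - Akern \<alpha> t m (m - j - 1) + Akern \<alpha> t m (m - j))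
            * (\<Sum>l = j + 1..m - 1. w l)^2)
       + (Akern \<alpha> t (m - 1) (m - 2) - Akern \<alpha> t m (m - 1)) * (\<Sum>l = 1..m - 1. w l)^2)"

definition rstar :: "real \<Rightarrow> real" where
  "rstar \<alpha> = (THE r. r > 0 \<and>
     2 * sqrt (2 * (1 - \<alpha>/2) * r / (1 + \<alpha> + (1 - \<alpha>/2) * r) + r / (1 + r))
     + 3 - 1 / (r^2 * (1 + r)) = 0)"

end

(*
  The scheme regroups as (partial^alpha_tau v)^(n-theta) = sum_k A^(n)_(n-k) nabla v^k
  + alpha/(2-alpha) a^(n)_0 nabla v^n, and summation by parts turns 2 nabla v^n times the
  kernel sum into G_n - G_(n-1) + R_n.  Hence G_n >= 0 and R_n >= 0 follow once
  A^(n)_0 >= A^(n)_1 >= ... >= A^(n)_(n-1) >= 0 and the first differences of A^(n) are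
  dominated by the shifted ones of A^(n-1).

  Each kernel entry combines the mean and the first moment of
  varpi'_n(s) = omega_(1-alpha)(t_(n-theta) - s) over one or two cells.  This kernel is
  nonnegative, increasing and convex on [t_0, t_(n-1)], and so is varpi'_(n-1) - varpi'_n
  on [t_0, t_(n-2)].
  Integrating twice by parts against affine weights gives one-cell estimates (trapezoid
  bound, tau^3 g'(a)/12 <= int (s - m) g(s) ds <= tau^3 g'(b)/12, ...).  Chained over three
  consecutive cells they leave a multiple of g' at an interior node, whose coefficient is
  nonnegative as soon as the step ratios are at least 19/50; and 19/50 < r_*(alpha).
*)
theory Submission
  imports Defs
begin

section \<open>Convex functions against affine weights\<close>

definition nonneg_incr_convex ::
    "real set \<Rightarrow> (real \<Rightarrow> real) \<Rightarrow> (real \<Rightarrow> real) \<Rightarrow> (real \<Rightarrow> real) \<Rightarrow> bool" where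
  "nonneg_incr_convex S g g' g'' \<longleftrightarrow>
     (\<forall>s\<in>S. (g has_real_derivative g' s) (at s) \<and> (g' has_real_derivative g'' s) (at s)
            \<and> 0 \<le> g s \<and> 0 \<le> g' s \<and> 0 \<le> g'' s)"

lemma nonneg_incr_convex_subset:
  "nonneg_incr_convex S g g' g'' \<Longrightarrow> T \<subseteq> S \<Longrightarrow> nonneg_incr_convex T g g' g''"
  unfolding nonneg_incr_convex_def by blast

lemma nonneg_incr_convexD:
  assumes "nonneg_incr_convex S g g' g''" "s \<in> S"
  shows "0 \<le> g s" "0 \<le> g' s"
  using assms unfolding nonneg_incr_convex_def by auto

lemma nonneg_incr_convex_continuous_on:
  "nonneg_incr_convex S g g' g'' \<Longrightarrow> continuous_on S g"
  unfolding nonneg_incr_convex_def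
  by (meson DERIV_isCont continuous_at_imp_continuous_on)

lemma has_integral_by_parts_twice:
  fixes g g' g'' F1 F2 w :: "real \<Rightarrow> real"
  assumes g: "nonneg_incr_convex {a..b} g g' g''" and "a \<le> b"
    and F1: "\<And>s. (F1 has_real_derivative - w s) (at s)"
    and F2: "\<And>s. (F2 has_real_derivative - F1 s) (at s)"
  shows "((\<lambda>s. F2 s * g'' s - w s * g s) has_integral
           (F1 b * g b + F2 b * g' b - (F1 a * g a + F2 a * g' a))) {a..b}"
proof -
  have "((\<lambda>s. F1 s * g s + F2 s * g' s) has_real_derivative (F2 s * g'' s - w s * g s)) (at s)"
    if "s \<in> {a..b}" for s
  proof -
    have "(g has_real_derivative g' s) (at s)" "(g' has_real_derivative g'' s) (at s)"
      using g that unfolding nonneg_incr_convex_def by auto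
    from DERIV_add[OF DERIV_mult[OF F1 this(1)] DERIV_mult[OF F2 this(2)]]
    show ?thesis by (simp add: algebra_simps)
  qed
  then show ?thesis
    using \<open>a \<le> b\<close> by (intro fundamental_theorem_of_calculus)
      (auto simp: has_real_derivative_iff_has_vector_derivative[symmetric]
            intro: has_field_derivative_at_within)
qed

text \<open>The cubic \<open>\<phi>(b - s)\<close> is a second antiderivative of the weight \<open>a0 + b0 (s - m)\<close>, with
  free constants \<open>C1, C2\<close>; the remainder after integrating twice by parts is
  \<open>\<integral> \<phi>(b - s) g''(s) ds \<ge> 0\<close>.\<close>
lemma affine_weight_integral_ge:
  fixes g g' g'' :: "real \<Rightarrow> real" and a b a0 b0 C1 C2 :: real
  assumes g: "nonneg_incr_convex {a..b} g g' g''" and ab: "a < b"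
    and \<phi>: "\<And>y. 0 \<le> y \<Longrightarrow> y \<le> b - a \<Longrightarrow>
               0 \<le> C2 + C1*y + (a0/2 + b0*(b - a)/4)*y^2 - b0*y^3/6"
  shows "(C1 + a0*(b - a))*g a + (C2 + C1*(b - a) + a0*(b - a)^2/2 + b0*(b - a)^3/12)*g' a
           - C1*g b - C2*g' b
         \<le> a0 * integral {a..b} g + b0 * integral {a..b} (\<lambda>s. (s - (a + b)/2) * g s)"
proof -
  define \<tau> where "\<tau> = b - a"
  define F1 where "F1 s = C1 + a0*(b - s) + b0*(\<tau>*(b - s) - (b - s)^2)/2" for s
  define F2 where "F2 s = C2 + C1*(b - s) + (a0/2 + b0*\<tau>/4)*(b - s)^2 - b0*(b - s)^3/6" for s
  define w where "w s = a0 + b0*(s - (a + b)/2)" for s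
  have "(F1 has_real_derivative - w s) (at s)" for s
    unfolding F1_def[abs_def] w_def \<tau>_def
    by (auto intro!: derivative_eq_intros simp: field_simps)
  moreover have "(F2 has_real_derivative - F1 s) (at s)" for s
    unfolding F1_def F2_def[abs_def] \<tau>_def
    by (auto intro!: derivative_eq_intros simp: field_simps power2_eq_square)
  ultimately have parts: "((\<lambda>s. F2 s * g'' s - w s * g s) has_integral
      (F1 b * g b + F2 b * g' b - (F1 a * g a + F2 a * g' a))) {a..b}"
    using g ab by (intro has_integral_by_parts_twice) auto
  have "continuous_on {a..b} g"
    using g by (rule nonneg_incr_convex_continuous_on)
  then have "((\<lambda>s. w s * g s) has_integral
      (a0 * integral {a..b} g + b0 * integral {a..b} (\<lambda>s. (s - (a + b)/2) * g s))) {a..b}"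
    unfolding w_def distrib_right mult.assoc
    by (intro has_integral_add has_integral_mult_right integrable_integral
          integrable_continuous_interval continuous_intros)
  from has_integral_add[OF parts this]
  have "((\<lambda>s. F2 s * g'' s) has_integral (F1 b * g b + F2 b * g' b - (F1 a * g a + F2 a * g' a)
      + (a0 * integral {a..b} g + b0 * integral {a..b} (\<lambda>s. (s - (a + b)/2) * g s)))) {a..b}"
    by simp
  moreover have "0 \<le> F2 s * g'' s" if "s \<in> {a..b}" for s
    using \<phi>[of "b - s"] g that unfolding nonneg_incr_convex_def F2_def \<tau>_def by simp
  ultimately have "0 \<le> F1 b * g b + F2 b * g' b - (F1 a * g a + F2 a * g' a)
      + (a0 * integral {a..b} g + b0 * integral {a..b} (\<lambda>s. (s - (a + b)/2) * g s))"
    by (rule has_integral_nonneg)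
  moreover have "F1 b = C1" "F2 b = C2" "F1 a = C1 + a0*(b - a)"
    "F2 a = C2 + C1*(b - a) + a0*(b - a)^2/2 + b0*(b - a)^3/12"
    unfolding F1_def F2_def \<tau>_def by (simp_all add: field_simps power2_eq_square power3_eq_cube)
  ultimately show ?thesis by (simp add: algebra_simps)
qed

context
  fixes g g' g'' :: "real \<Rightarrow> real" and a b :: real
  assumes g: "nonneg_incr_convex {a..b} g g' g''" and ab: "a < b"
begin

lemma nonneg_incr_convex_tangent_le: "g a + (b - a) * g' a \<le> g b"
  using affine_weight_integral_ge[OF g ab, of 0 1 0 0] by simp

lemma nonneg_incr_convex_deriv_mono: "g' a \<le> g' b"
  using affine_weight_integral_ge[OF g ab, of 1 0 0 0] by simp

lemma nonneg_incr_convex_moment_ge: "(b - a)^3/12 * g' a \<le> integral {a..b} (\<lambda>s. (s - (a + b)/2) * g s)"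
proof -
  have "0 \<le> (b - a)/4*y^2 - y^3/6" if "0 \<le> y" "y \<le> b - a" for y
  proof -
    have "0 \<le> y^2 * ((b - a)/4 - y/6)" using that by simp
    then show ?thesis by (simp add: algebra_simps power2_eq_square power3_eq_cube)
  qed
  then show ?thesis
    using affine_weight_integral_ge[OF g ab, of 0 0 0 1] by (simp add: mult.commute)
qed

lemma nonneg_incr_convex_moment_le: "integral {a..b} (\<lambda>s. (s - (a + b)/2) * g s) \<le> (b - a)^3/12 * g' b"
proof -
  have "0 \<le> (b - a)^3/12 + 0*y + (0/2 + (-1)*(b - a)/4)*y^2 - (-1)*y^3/6"
    if "0 \<le> y" "y \<le> b - a" for y
  proof -
    have "0 \<le> (b - a - y)^2 * (b - a + 2*y) / 12" using that by simp
    then show ?thesis by (simp add: field_simps power2_eq_square power3_eq_cube)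
  qed
  from affine_weight_integral_ge[OF g ab this] show ?thesis by simp
qed

lemma nonneg_incr_convex_trapezoid: "integral {a..b} g \<le> (b - a) * (g a + g b) / 2"
proof -
  have "0 \<le> (b - a)/2*y - y^2/2" if "0 \<le> y" "y \<le> b - a" for y
  proof -
    have "0 \<le> y * (b - a - y) / 2" using that by simp
    then show ?thesis by (simp add: field_simps power2_eq_square)
  qed
  then show ?thesis
    using affine_weight_integral_ge[OF g ab, of 0 "(b - a)/2" "-1" 0]
    by (simp add: field_simps power2_eq_square)
qed

lemma nonneg_incr_convex_mean_moment_ge:
  assumes "0 \<le> \<beta>" "\<beta> * (b - a)^2 \<le> 2"
  shows "g a + (b - a)/3 * g' a
           \<le> integral {a..b} g / (b - a) - \<beta> * integral {a..b} (\<lambda>s. (s - (a + b)/2) * g s)"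
proof -
  define \<tau> where "\<tau> = b - a"
  have \<tau>: "0 < \<tau>" using ab unfolding \<tau>_def by simp
  have "0 \<le> (1/(2*\<tau>) - \<beta>*\<tau>/4) * y^2 + \<beta>*y^3/6" if "0 \<le> y" for y
  proof -
    have "0 \<le> (2 - \<beta>*\<tau>^2) / (4*\<tau>)" using assms \<tau> unfolding \<tau>_def by simp
    also have "(2 - \<beta>*\<tau>^2) / (4*\<tau>) = 1/(2*\<tau>) - \<beta>*\<tau>/4"
      using \<tau> by (simp add: field_simps power2_eq_square)
    finally show ?thesis using assms that by simp
  qed
  then have "g a + (\<tau>/2 - \<beta>*\<tau>^3/12) * g' a
      \<le> integral {a..b} g / \<tau> - \<beta> * integral {a..b} (\<lambda>s. (s - (a + b)/2) * g s)"
    using affine_weight_integral_ge[OF g ab, of 0 0 "1/\<tau>" "-\<beta>"] \<tau>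
    by (simp add: \<tau>_def[symmetric] field_simps power2_eq_square)
  moreover have "\<tau>/3 * g' a \<le> (\<tau>/2 - \<beta>*\<tau>^3/12) * g' a"
  proof (rule mult_right_mono)
    have "\<beta>*\<tau>^3/12 = (\<beta>*\<tau>^2) * \<tau> / 12" by (simp add: power2_eq_square power3_eq_cube)
    also have "\<dots> \<le> 2 * \<tau> / 12" using assms \<tau> unfolding \<tau>_def by (intro divide_right_mono mult_right_mono) auto
    finally show "\<tau>/3 \<le> \<tau>/2 - \<beta>*\<tau>^3/12" by simp
    show "0 \<le> g' a" using nonneg_incr_convexD[OF g, of a] ab by simp
  qed
  ultimately show ?thesis unfolding \<tau>_def by simp
qed

end

section \<open>Kernel entries on a mesh\<close>

definition cell_integral :: "(real \<Rightarrow> real) \<Rightarrow> (nat \<Rightarrow> real) \<Rightarrow> nat \<Rightarrow> real" where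
  "cell_integral f t k = integral {t (k - 1)..t k} f"

definition cell_moment :: "(real \<Rightarrow> real) \<Rightarrow> (nat \<Rightarrow> real) \<Rightarrow> nat \<Rightarrow> real" where
  "cell_moment f t k = integral {t (k - 1)..t k} (\<lambda>s. (s - (t (k - 1) + t k)/2) * f s)"

definition kern_cell :: "(real \<Rightarrow> real) \<Rightarrow> (nat \<Rightarrow> real) \<Rightarrow> nat \<Rightarrow> real" where
  "kern_cell f t k = cell_integral f t k / tau t k
                - 2 * cell_moment f t k / (tau t k * (tau t k + tau t (k + 1)))"

definition kern_left :: "(real \<Rightarrow> real) \<Rightarrow> (nat \<Rightarrow> real) \<Rightarrow> nat \<Rightarrow> real" where
  "kern_left f t k = 2 * cell_moment f t (k - 1) / (tau t k * (tau t (k - 1) + tau t k))"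

text \<open>With \<open>f = varpi' \<alpha> t n\<close> and \<open>1 \<le> k < n\<close>, \<open>kern f t k\<close> is the kernel entry
  \<open>A^(n)_(n-k)\<close> and \<open>kern_top f t n\<close> is \<open>A^(n)_0\<close>.  Each \<open>\<zeta>\<close>-term of the scheme is a first
  moment over one cell, shared between the entry of that cell (\<open>kern_cell\<close>) and the entry of
  the next cell (\<open>kern_left\<close>).\<close>
definition kern :: "(real \<Rightarrow> real) \<Rightarrow> (nat \<Rightarrow> real) \<Rightarrow> nat \<Rightarrow> real" where
  "kern f t k = kern_cell f t k + (if 2 \<le> k then kern_left f t k else 0)"

definition kern_top :: "(real \<Rightarrow> real) \<Rightarrow> (nat \<Rightarrow> real) \<Rightarrow> nat \<Rightarrow> real" where
  "kern_top f t n = 2 * (f (t (n - 1)) + (if 2 \<le> n then kern_left f t n else 0))"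

lemma cell_integral_diff:
  assumes "continuous_on {..<c} f" "continuous_on {..<c} h" "t k < c"
  shows "cell_integral (\<lambda>s. f s - h s) t k = cell_integral f t k - cell_integral h t k"
proof -
  have "{t (k - 1)..t k} \<subseteq> {..<c}" using assms(3) by auto
  then show ?thesis
    unfolding cell_integral_def using assms
    by (intro integral_diff integrable_continuous_interval) (auto intro: continuous_on_subset)
qed

lemma cell_moment_diff:
  assumes "continuous_on {..<c} f" "continuous_on {..<c} h" "t k < c"
  shows "cell_moment (\<lambda>s. f s - h s) t k = cell_moment f t k - cell_moment h t k"
proof -
  have "{t (k - 1)..t k} \<subseteq> {..<c}" using assms(3) by auto
  then have "continuous_on {t (k - 1)..t k} f" "continuous_on {t (k - 1)..t k} h"
    using assms by (auto intro: continuous_on_subset)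
  then show ?thesis
    unfolding cell_moment_def right_diff_distrib
    by (intro integral_diff integrable_continuous_interval continuous_intros)
qed

lemma kern_cell_diff:
  assumes "continuous_on {..<c} f" "continuous_on {..<c} h" "t k < c"
  shows "kern_cell (\<lambda>s. f s - h s) t k = kern_cell f t k - kern_cell h t k"
  unfolding kern_cell_def cell_integral_diff[where t=t and k=k, OF assms] cell_moment_diff[where t=t and k=k, OF assms]
  by (simp add: diff_divide_distrib right_diff_distrib)

lemma kern_left_diff:
  assumes "continuous_on {..<c} f" "continuous_on {..<c} h" "t (k - 1) < c"
  shows "kern_left (\<lambda>s. f s - h s) t k = kern_left f t k - kern_left h t k"
  unfolding kern_left_def cell_moment_diff[where t=t and k="k - 1", OF assms]
  by (simp add: diff_divide_distrib right_diff_distrib)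

lemma kern_diff:
  assumes "continuous_on {..<c} f" "continuous_on {..<c} h" "t (k - 1) < c" "t k < c"
  shows "kern (\<lambda>s. f s - h s) t k = kern f t k - kern h t k"
  using kern_cell_diff[where t=t and k=k, OF assms(1,2,4)] kern_left_diff[where t=t and k=k, OF assms(1-3)] unfolding kern_def by simp

lemma left_cell_weight_le:
  fixes \<tau>1 \<tau>2 :: real
  assumes "0 < \<tau>1" "0 < \<tau>2" "19 * \<tau>1 \<le> 50 * \<tau>2"
  shows "\<tau>1^3 / (6 * \<tau>2 * (\<tau>1 + \<tau>2)) \<le> 29/30 * \<tau>2"
proof -
  have "\<tau>1^2 \<le> (50/19 * \<tau>2)^2"
    using assms by (intro power_mono) auto
  then have "\<tau>1^3 \<le> \<tau>1 * (50/19 * \<tau>2)^2"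
    using assms by (simp add: power3_eq_cube power2_eq_square mult_left_mono)
  also have "\<dots> \<le> 29/5 * \<tau>2^2 * (\<tau>1 + \<tau>2)"
  proof -
    have "2500/361 * \<tau>1 \<le> 29/5 * (\<tau>1 + \<tau>2)" using assms by simp
    from mult_left_mono[OF this, of "\<tau>2^2"] show ?thesis
      by (simp add: power2_eq_square algebra_simps)
  qed
  finally have "\<tau>1^3 \<le> 29/30 * \<tau>2 * (6 * \<tau>2 * (\<tau>1 + \<tau>2))"
    by (simp add: power2_eq_square)
  moreover have "0 < 6 * \<tau>2 * (\<tau>1 + \<tau>2)" using assms by simp
  ultimately show ?thesis by (simp add: pos_divide_le_eq)
qed

lemma two_step_weight_ge:
  fixes \<tau>2 \<tau>3 :: real
  assumes "0 < \<tau>3"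
  shows "7/15 * \<tau>2 \<le> \<tau>3/3 + \<tau>2^2 / (6 * \<tau>3)"
proof -
  have "2 * (\<tau>3 - 7/10 * \<tau>2)^2 + \<tau>2^2/50 = 2*\<tau>3^2 + \<tau>2^2 - 14/5*\<tau>2*\<tau>3"
    by (simp add: power2_eq_square algebra_simps)
  moreover have "0 \<le> 2 * (\<tau>3 - 7/10 * \<tau>2)^2 + \<tau>2^2/50" by simp
  ultimately have "14/5*\<tau>2*\<tau>3 \<le> 2*\<tau>3^2 + \<tau>2^2" by linarith
  then show ?thesis
    using assms by (simp add: field_simps power2_eq_square)
qed

locale mesh =
  fixes t :: "nat \<Rightarrow> real" and N :: nat
  assumes mesh: "\<forall>k\<in>{1..N}. t (k - 1) < t k"
begin

lemma tau_pos: "1 \<le> k \<Longrightarrow> k \<le> N \<Longrightarrow> 0 < tau t k"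
  using mesh unfolding tau_def by auto

lemma mesh_less: "i < j \<Longrightarrow> j \<le> N \<Longrightarrow> t i < t j"
proof (induction j)
  case (Suc j)
  then have "t j < t (Suc j)" using mesh by force
  with Suc show ?case by (cases "i = j") auto
qed simp

lemma mesh_le: "i \<le> j \<Longrightarrow> j \<le> N \<Longrightarrow> t i \<le> t j"
  using mesh_less[of i j] by (cases "i = j") auto

lemma nonneg_incr_convex_mesh_subset:
  assumes "nonneg_incr_convex {t i..t j} f f' f''" "i \<le> i'" "i' \<le> j'" "j' \<le> j" "j \<le> N"
  shows "nonneg_incr_convex {t i'..t j'} f f' f''"
  using assms(1) by (rule nonneg_incr_convex_subset) (use assms mesh_le in auto)

lemma ratio_pos: "2 \<le> k \<Longrightarrow> k \<le> N \<Longrightarrow> 0 < ratio t k"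
  using tau_pos[of k] tau_pos[of "k - 1"] unfolding ratio_def by simp

lemma cell_moment_nonneg:
  assumes "1 \<le> k" "k \<le> N" and f: "nonneg_incr_convex {t (k - 1)..t k} f f' f''"
  shows "0 \<le> cell_moment f t k"
proof -
  have "t (k - 1) < t k" using mesh_less assms by simp
  then have "0 \<le> (t k - t (k - 1))^3/12 * f' (t (k - 1))"
    using nonneg_incr_convexD[OF f, of "t (k - 1)"] by simp
  also have "\<dots> \<le> cell_moment f t k"
    unfolding cell_moment_def using nonneg_incr_convex_moment_ge[OF f \<open>t (k - 1) < t k\<close>] .
  finally show ?thesis .
qed

lemma kern_left_nonneg:
  assumes "2 \<le> k" "k \<le> N" and f: "nonneg_incr_convex {t (k - 2)..t (k - 1)} f f' f''"
  shows "0 \<le> kern_left f t k"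
proof -
  have "k - 1 - 1 = k - 2" by simp
  then have "0 \<le> cell_moment f t (k - 1)"
    using cell_moment_nonneg[of "k - 1"] f assms by simp
  moreover have "0 < tau t (k - 1)" "0 < tau t k" using tau_pos assms by auto
  ultimately show ?thesis unfolding kern_left_def by simp
qed

lemma kern_cell_ge:
  assumes "1 \<le> k" "k < N" and f: "nonneg_incr_convex {t (k - 1)..t k} f f' f''"
  shows "f (t (k - 1)) + tau t k / 3 * f' (t (k - 1)) \<le> kern_cell f t k"
proof -
  define \<tau> \<tau>' where "\<tau> = tau t k" and "\<tau>' = tau t (k + 1)"
  have pos: "0 < \<tau>" "0 < \<tau>'" using tau_pos assms unfolding \<tau>_def \<tau>'_def by auto
  have "0 < \<tau> * (\<tau> + \<tau>')" using pos by simp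
  then have "2 / (\<tau> * (\<tau> + \<tau>')) * (t k - t (k - 1))^2 \<le> 2"
    using pos unfolding \<tau>_def tau_def
    by (simp add: pos_divide_le_eq power2_eq_square algebra_simps)
  from nonneg_incr_convex_mean_moment_ge[OF f _ _ this] pos show ?thesis
    unfolding kern_cell_def cell_integral_def cell_moment_def \<tau>_def \<tau>'_def tau_def
    by (simp add: mult.commute)
qed

lemma kern_cell_nonneg:
  assumes "1 \<le> k" "k < N" and f: "nonneg_incr_convex {t (k - 1)..t k} f f' f''"
  shows "0 \<le> kern_cell f t k"
proof -
  have "t (k - 1) < t k" using mesh_less assms by simp
  then have "0 \<le> f (t (k - 1)) + tau t k / 3 * f' (t (k - 1))"
    using nonneg_incr_convexD[OF f, of "t (k - 1)"] tau_pos[of k] assms by simp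
  with kern_cell_ge[OF assms] show ?thesis by linarith
qed

lemma cell_integral_mean_le:
  assumes "1 \<le> k" "k \<le> N" and f: "nonneg_incr_convex {t (k - 1)..t k} f f' f''"
  shows "cell_integral f t k / tau t k \<le> (f (t (k - 1)) + f (t k)) / 2"
proof -
  have "t (k - 1) < t k" using mesh_less assms by simp
  from nonneg_incr_convex_trapezoid[OF f this] this show ?thesis
    unfolding cell_integral_def tau_def by (simp add: divide_le_eq mult.commute)
qed

lemma kern_left_Suc_minus_kern_cell:
  assumes "1 \<le> k" "k < N"
  shows "kern_left f t (k + 1) - kern_cell f t k
           = 2 * cell_moment f t k / (tau t k * tau t (k + 1)) - cell_integral f t k / tau t k"
proof -
  have pos: "0 < tau t k" "0 < tau t (k + 1)" using tau_pos assms by auto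
  then have "2 / (tau t (k + 1) * (tau t k + tau t (k + 1))) + 2 / (tau t k * (tau t k + tau t (k + 1)))
      = 2 / (tau t k * tau t (k + 1))"
    by (simp add: divide_simps)
  from arg_cong[OF this, of "\<lambda>x. cell_moment f t k * x"] show ?thesis
    unfolding kern_left_def kern_cell_def by (simp add: algebra_simps)
qed

lemma kern_left_eq_ratio:
  assumes "2 \<le> k" "k \<le> N"
  shows "kern_left f t k = 2 / (tau t (k - 1))^2 * cell_moment f t (k - 1) / (ratio t k * (1 + ratio t k))"
proof -
  have pos: "0 < tau t (k - 1)" "0 < tau t k" using tau_pos assms by auto
  then have "1 + ratio t k = (tau t (k - 1) + tau t k) / tau t (k - 1)"
    unfolding ratio_def by (simp add: field_simps)
  then show ?thesis
    unfolding kern_left_def ratio_def using pos add_pos_pos[OF pos]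
    by (simp add: field_simps power2_eq_square)
qed

lemma kern_cell_eq_ratio:
  assumes "1 \<le> k" "k < N"
  shows "kern_cell f t k = cell_integral f t k / tau t k
                      - 2 / (tau t k)^2 * cell_moment f t k / (1 + ratio t (k + 1))"
proof -
  have pos: "0 < tau t k" "0 < tau t (k + 1)" using tau_pos assms by auto
  then have "1 + ratio t (k + 1) = (tau t k + tau t (k + 1)) / tau t k"
    unfolding ratio_def by (simp add: field_simps)
  then show ?thesis
    unfolding kern_cell_def using pos add_pos_pos[OF pos]
    by (simp add: field_simps power2_eq_square)
qed

end

text \<open>Only \<open>r\<^sub>k \<ge> 19/50\<close> is used below; \<open>rstar_gt\<close> derives it from \<open>r\<^sub>k \<ge> r\<^sub>*(\<alpha>)\<close>.\<close>
locale ratio_mesh = mesh +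
  assumes ratio: "\<forall>k\<in>{2..N}. 19/50 \<le> ratio t k"
begin

lemma kern_left_le_deriv:
  assumes k: "2 \<le> k" "k \<le> N" and f: "nonneg_incr_convex {t (k - 2)..t (k - 1)} f f' f''"
  shows "kern_left f t k \<le> 29/30 * tau t k * f' (t (k - 1))"
proof -
  define \<tau>0 \<tau> where "\<tau>0 = tau t (k - 1)" and "\<tau> = tau t k"
  have pos: "0 < \<tau>0" "0 < \<tau>" using tau_pos k unfolding \<tau>0_def \<tau>_def by auto
  have "19/50 \<le> \<tau> / \<tau>0" using ratio k unfolding ratio_def \<tau>0_def \<tau>_def by auto
  then have r: "19 * \<tau>0 \<le> 50 * \<tau>" using pos by (simp add: field_simps)
  have e: "k - 1 - 1 = k - 2" by simp
  have "t (k - 2) < t (k - 1)" using mesh_less k by simp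
  from nonneg_incr_convex_moment_le[OF f this]
  have "cell_moment f t (k - 1) \<le> \<tau>0^3/12 * f' (t (k - 1))"
    unfolding cell_moment_def e \<tau>0_def tau_def .
  then have "kern_left f t k \<le> 2 * (\<tau>0^3/12 * f' (t (k - 1))) / (\<tau> * (\<tau>0 + \<tau>))"
    unfolding kern_left_def \<tau>0_def[symmetric] \<tau>_def[symmetric] using pos
    by (intro divide_right_mono) auto
  also have "\<dots> = \<tau>0^3 / (6 * \<tau> * (\<tau>0 + \<tau>)) * f' (t (k - 1))" by simp
  also have "\<dots> \<le> 29/30 * \<tau> * f' (t (k - 1))"
    using left_cell_weight_le[OF pos r] nonneg_incr_convexD[OF f, of "t (k - 1)"]
      \<open>t (k - 2) < t (k - 1)\<close> by (intro mult_right_mono) auto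
  finally show ?thesis unfolding \<tau>_def .
qed

text \<open>With \<open>\<tau> = tau t k\<close> and \<open>\<tau>' = tau t (k + 1)\<close>, the trapezoid, moment and tangent bounds
  leave \<open>(\<tau>/2 + \<tau>'/3 + \<tau>\<^sup>2/(6\<tau>') - 29/30 \<tau>) f'(t (k - 1)) \<ge> 0\<close>; the term \<open>29/30 \<tau>\<close> comes
  from the cell two steps back and is where the step-ratio bound is needed.\<close>
lemma kern_mono:
  assumes k: "1 \<le> k" "k + 1 < N" and f: "nonneg_incr_convex {t (k - 2)..t (k + 1)} f f' f''"
  shows "kern f t k \<le> kern f t (k + 1)"
proof -
  define x1 x2 \<tau> \<tau>' where "x1 = t (k - 1)" and "x2 = t k"
    and "\<tau> = tau t k" and "\<tau>' = tau t (k + 1)"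
  define P Q where "P = cell_integral f t k" and "Q = cell_moment f t k"
  have idx: "k - 2 \<le> k - 1" "k - 1 \<le> k" "k - 1 \<le> k + 1" by arith+
  have pos: "0 < \<tau>" "0 < \<tau>'" using tau_pos k unfolding \<tau>_def \<tau>'_def by auto
  have x12: "x1 < x2" "\<tau> = x2 - x1"
    unfolding x1_def x2_def \<tau>_def tau_def using mesh_less k by auto
  have f1: "nonneg_incr_convex {x1..x2} f f' f''"
    using nonneg_incr_convex_mesh_subset[OF f, of "k - 1" k] idx k unfolding x1_def x2_def by simp
  have right: "f x2 + \<tau>'/3 * f' x2 \<le> kern_cell f t (k + 1)"
    using kern_cell_ge[of "k + 1"] nonneg_incr_convex_mesh_subset[OF f, of k "k + 1"] idx k
    unfolding x2_def \<tau>'_def by simp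
  have mid: "kern_left f t (k + 1) - kern_cell f t k = 2 * Q / (\<tau> * \<tau>') - P / \<tau>"
    using kern_left_Suc_minus_kern_cell k unfolding P_def Q_def \<tau>_def \<tau>'_def by simp
  have P: "P / \<tau> \<le> (f x1 + f x2) / 2"
    using cell_integral_mean_le[of k] f1 k unfolding P_def \<tau>_def x1_def x2_def by simp
  have "\<tau>^3/12 * f' x1 \<le> Q"
    using nonneg_incr_convex_moment_ge[OF f1 x12(1)]
    unfolding Q_def cell_moment_def x1_def x2_def x12(2) .
  then have Q: "\<tau>^2 / (6 * \<tau>') * f' x1 \<le> 2 * Q / (\<tau> * \<tau>')"
    using pos by (simp add: field_simps power2_eq_square power3_eq_cube)
  have tangent: "\<tau> * f' x1 \<le> f x2 - f x1"
    using nonneg_incr_convex_tangent_le[OF f1 x12(1)] x12 by simp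
  have f'x: "0 \<le> f' x1" "\<tau>'/3 * f' x1 \<le> \<tau>'/3 * f' x2"
    using nonneg_incr_convexD[OF f1, of x1] nonneg_incr_convex_deriv_mono[OF f1 x12(1)] x12 pos
    by auto
  have left: "(if 2 \<le> k then kern_left f t k else 0) \<le> 29/30 * \<tau> * f' x1"
    using kern_left_le_deriv[of k] nonneg_incr_convex_mesh_subset[OF f, of "k - 2" "k - 1"]
      idx f'x(1) pos k
    unfolding x1_def \<tau>_def by auto
  have "7/15 * \<tau> * f' x1 \<le> (\<tau>'/3 + \<tau>^2 / (6 * \<tau>')) * f' x1"
    using two_step_weight_ge[OF pos(2), of \<tau>] f'x(1) by (intro mult_right_mono) auto
  then have "0 \<le> f x2 + \<tau>'/3 * f' x2 + (2 * Q / (\<tau> * \<tau>') - P / \<tau>) - 29/30 * \<tau> * f' x1"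
    using P Q tangent f'x left by (simp add: algebra_simps)
  moreover have "kern f t (k + 1) = kern_cell f t (k + 1) + kern_left f t (k + 1)"
    using k by (simp add: kern_def)
  ultimately show ?thesis
    using right mid left unfolding kern_def[of f t k] by linarith
qed

lemma kern_le_twice:
  assumes k: "1 \<le> k" "k < N" and f: "nonneg_incr_convex {t (k - 2)..t k} f f' f''"
  shows "kern f t k \<le> 2 * f (t k)"
proof -
  define x1 x2 \<tau> where "x1 = t (k - 1)" and "x2 = t k" and "\<tau> = tau t k"
  have idx: "k - 2 \<le> k - 1" "k - 1 \<le> k" by arith+
  have pos: "0 < \<tau>" "0 < tau t (k + 1)" using tau_pos k unfolding \<tau>_def by auto
  have x12: "x1 < x2" "\<tau> = x2 - x1"
    unfolding x1_def x2_def \<tau>_def tau_def using mesh_less k by auto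
  have f1: "nonneg_incr_convex {x1..x2} f f' f''"
    using nonneg_incr_convex_mesh_subset[OF f, of "k - 1" k] idx k unfolding x1_def x2_def by simp
  have "0 \<le> cell_moment f t k"
    using cell_moment_nonneg[of k] f1 k unfolding x1_def x2_def by simp
  then have "kern_cell f t k \<le> cell_integral f t k / \<tau>"
    using pos unfolding kern_cell_def \<tau>_def by simp
  also have "\<dots> \<le> (f x1 + f x2) / 2"
    using cell_integral_mean_le[of k] f1 k unfolding \<tau>_def x1_def x2_def by simp
  finally have right: "kern_cell f t k \<le> (f x1 + f x2) / 2" .
  have f'x: "0 \<le> f' x1" using nonneg_incr_convexD[OF f1, of x1] x12 by simp
  have "(if 2 \<le> k then kern_left f t k else 0) \<le> 29/30 * \<tau> * f' x1"
    using kern_left_le_deriv[of k] nonneg_incr_convex_mesh_subset[OF f, of "k - 2" "k - 1"]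
      idx f'x pos k
    unfolding x1_def \<tau>_def by auto
  also have "\<dots> \<le> \<tau> * f' x1" using f'x pos by simp
  finally have left: "(if 2 \<le> k then kern_left f t k else 0) \<le> \<tau> * f' x1" .
  have "0 \<le> f x1" "0 \<le> f x2" using nonneg_incr_convexD[OF f1] x12 by auto
  then show ?thesis
    using right left nonneg_incr_convex_tangent_le[OF f1 x12(1)] x12
    unfolding kern_def x2_def by (simp split: if_splits)
qed

end

section \<open>The Caputo kernel\<close>

definition caputo_kernel :: "real \<Rightarrow> real \<Rightarrow> real \<Rightarrow> real" where
  "caputo_kernel \<alpha> c s = omega (1 - \<alpha>) (c - s)"

definition caputo_kernel' :: "real \<Rightarrow> real \<Rightarrow> real \<Rightarrow> real" where
  "caputo_kernel' \<alpha> c s = \<alpha> * (c - s) powr (- \<alpha> - 1) / Gamma (1 - \<alpha>)"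

definition caputo_kernel'' :: "real \<Rightarrow> real \<Rightarrow> real \<Rightarrow> real" where
  "caputo_kernel'' \<alpha> c s = \<alpha> * (\<alpha> + 1) * (c - s) powr (- \<alpha> - 2) / Gamma (1 - \<alpha>)"

lemma caputo_kernel_eq: "caputo_kernel \<alpha> c s = (c - s) powr (- \<alpha>) / Gamma (1 - \<alpha>)"
  unfolding caputo_kernel_def omega_def by simp

lemma varpi'_eq_caputo_kernel: "varpi' \<alpha> t n = caputo_kernel \<alpha> (tth \<alpha> t n)"
  unfolding varpi'_def caputo_kernel_def ..

lemma has_real_derivative_caputo_kernel:
  assumes "s < c"
  shows "(caputo_kernel \<alpha> c has_real_derivative caputo_kernel' \<alpha> c s) (at s)"
proof -
  have "((\<lambda>s. (c - s) powr (- \<alpha>)) has_real_derivative \<alpha> * (c - s) powr (- \<alpha> - 1)) (at s)"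
    using assms by (auto intro!: derivative_eq_intros simp: field_simps)
  from DERIV_cdivide[OF this, of "Gamma (1 - \<alpha>)"] show ?thesis
    unfolding caputo_kernel_eq[abs_def] caputo_kernel'_def by simp
qed

lemma has_real_derivative_caputo_kernel':
  assumes "s < c"
  shows "(caputo_kernel' \<alpha> c has_real_derivative caputo_kernel'' \<alpha> c s) (at s)"
proof -
  have "((\<lambda>s. \<alpha> * (c - s) powr (- \<alpha> - 1)) has_real_derivative
          \<alpha> * (\<alpha> + 1) * (c - s) powr (- \<alpha> - 2)) (at s)"
    using assms
    by (auto intro!: derivative_eq_intros
          simp: field_simps diff_diff_eq[symmetric] simp del: diff_diff_eq)
  from DERIV_cdivide[OF this, of "Gamma (1 - \<alpha>)"] show ?thesis
    unfolding caputo_kernel'_def[abs_def] caputo_kernel''_def by simp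
qed

lemma continuous_on_caputo_kernel: "continuous_on {..<c} (caputo_kernel \<alpha> c)"
  unfolding caputo_kernel_eq[abs_def] divide_inverse by (intro continuous_intros) auto

lemma caputo_kernel_nonneg_incr_convex:
  assumes "0 \<le> \<alpha>" "\<alpha> < 1" "b < c"
  shows "nonneg_incr_convex {a..b} (caputo_kernel \<alpha> c) (caputo_kernel' \<alpha> c) (caputo_kernel'' \<alpha> c)"
  unfolding nonneg_incr_convex_def
proof (intro ballI conjI)
  fix s assume "s \<in> {a..b}"
  then have "s < c" using assms by simp
  then show "(caputo_kernel \<alpha> c has_real_derivative caputo_kernel' \<alpha> c s) (at s)"
    "(caputo_kernel' \<alpha> c has_real_derivative caputo_kernel'' \<alpha> c s) (at s)"
    by (rule has_real_derivative_caputo_kernel has_real_derivative_caputo_kernel')+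
  have "0 < Gamma (1 - \<alpha>)" using assms by simp
  then show "0 \<le> caputo_kernel \<alpha> c s" "0 \<le> caputo_kernel' \<alpha> c s" "0 \<le> caputo_kernel'' \<alpha> c s"
    unfolding caputo_kernel_eq caputo_kernel'_def caputo_kernel''_def using assms by simp_all
qed

text \<open>The coefficients of \<open>\<R>\<^sub>n\<close> are kernel entries of such differences (\<open>kern_diff\<close>).\<close>
lemma caputo_kernel_diff_nonneg_incr_convex:
  assumes "0 \<le> \<alpha>" "\<alpha> < 1" "b < c'" "c' \<le> c"
  shows "nonneg_incr_convex {a..b} (\<lambda>s. caputo_kernel \<alpha> c' s - caputo_kernel \<alpha> c s)
           (\<lambda>s. caputo_kernel' \<alpha> c' s - caputo_kernel' \<alpha> c s)
           (\<lambda>s. caputo_kernel'' \<alpha> c' s - caputo_kernel'' \<alpha> c s)"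
  unfolding nonneg_incr_convex_def
proof (intro ballI conjI)
  fix s assume "s \<in> {a..b}"
  then have s: "s < c'" "s < c" using assms by auto
  show "((\<lambda>s. caputo_kernel \<alpha> c' s - caputo_kernel \<alpha> c s) has_real_derivative
          caputo_kernel' \<alpha> c' s - caputo_kernel' \<alpha> c s) (at s)"
    "((\<lambda>s. caputo_kernel' \<alpha> c' s - caputo_kernel' \<alpha> c s) has_real_derivative
          caputo_kernel'' \<alpha> c' s - caputo_kernel'' \<alpha> c s) (at s)"
    using s by (auto intro!: DERIV_diff has_real_derivative_caputo_kernel
                               has_real_derivative_caputo_kernel')
  have \<Gamma>: "0 < Gamma (1 - \<alpha>)" using assms by simp
  have mono: "(c - s) powr e \<le> (c' - s) powr e" if "e \<le> 0" for e
    using powr_mono2'[OF that, of "c' - s" "c - s"] s assms by simp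
  have "(c - s) powr (- \<alpha>) \<le> (c' - s) powr (- \<alpha>)"
    "\<alpha> * (c - s) powr (- \<alpha> - 1) \<le> \<alpha> * (c' - s) powr (- \<alpha> - 1)"
    "\<alpha> * (\<alpha> + 1) * (c - s) powr (- \<alpha> - 2) \<le> \<alpha> * (\<alpha> + 1) * (c' - s) powr (- \<alpha> - 2)"
    using mono assms by (auto intro: mult_left_mono)
  then show "0 \<le> caputo_kernel \<alpha> c' s - caputo_kernel \<alpha> c s"
    "0 \<le> caputo_kernel' \<alpha> c' s - caputo_kernel' \<alpha> c s"
    "0 \<le> caputo_kernel'' \<alpha> c' s - caputo_kernel'' \<alpha> c s"
    unfolding caputo_kernel_eq caputo_kernel'_def caputo_kernel''_def
    using \<Gamma> by (simp_all add: divide_right_mono)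
qed

lemma integral_caputo_kernel:
  assumes "\<alpha> < 1" "a < c"
  shows "integral {a..c} (caputo_kernel \<alpha> c) = (c - a) powr (1 - \<alpha>) / ((1 - \<alpha>) * Gamma (1 - \<alpha>))"
proof -
  define F where "F s = - ((c - s) powr (1 - \<alpha>)) / ((1 - \<alpha>) * Gamma (1 - \<alpha>))" for s
  have \<Gamma>: "0 < Gamma (1 - \<alpha>)" using assms by simp
  have "(caputo_kernel \<alpha> c has_integral (F c - F a)) {a..c}"
  proof (rule fundamental_theorem_of_calculus_interior)
    have "continuous_on {a..c} (\<lambda>s. (c - s) powr (1 - \<alpha>))"
      using assms by (intro continuous_on_powr' continuous_intros) auto
    then show "continuous_on {a..c} F"
      unfolding F_def
      by (intro continuous_on_divide continuous_on_minus continuous_on_const) (use \<Gamma> assms in \<open>auto simp: less_imp_neq[symmetric]\<close>)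
    fix s assume "s \<in> {a<..<c}"
    then have "((\<lambda>s. (c - s) powr (1 - \<alpha>)) has_real_derivative (1 - \<alpha>) * (c - s) powr (- \<alpha>) * (-1)) (at s)"
      by (auto intro!: derivative_eq_intros)
    from DERIV_cdivide[OF DERIV_minus[OF this], of "(1 - \<alpha>) * Gamma (1 - \<alpha>)"]
    have "(F has_real_derivative caputo_kernel \<alpha> c s) (at s)"
      unfolding F_def[abs_def] caputo_kernel_eq using assms by simp
    then show "(F has_vector_derivative caputo_kernel \<alpha> c s) (at s)"
      by (simp add: has_real_derivative_iff_has_vector_derivative)
  qed (use assms in simp)
  then show ?thesis unfolding F_def by (simp add: integral_unique)
qed

lemma caputo_kernel_mult_antimono:
  assumes "\<alpha> < 1" "a \<le> s" "s < c"
  shows "(c - s) * caputo_kernel \<alpha> c s \<le> (c - a) * caputo_kernel \<alpha> c a"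
proof -
  have pow: "x * caputo_kernel \<alpha> c (c - x) = x powr (1 - \<alpha>) / Gamma (1 - \<alpha>)" if "0 < x" for x
    using that by (simp add: caputo_kernel_eq powr_diff powr_minus_divide)
  have "(c - s) powr (1 - \<alpha>) \<le> (c - a) powr (1 - \<alpha>)"
    using assms by (intro powr_mono2) auto
  then show ?thesis
    using pow[of "c - s"] pow[of "c - a"] assms
    by (simp add: divide_right_mono)
qed

lemma caputo_kernel_weight_le:
  assumes "\<alpha> < 1" "0 < \<tau>'" "a \<le> s" "s \<le> b" "b + \<tau>'/2 \<le> c" "c \<le> b + \<tau>'"
  shows "(b - a + \<tau>' - 2 * (s - (a + b)/2)) * caputo_kernel \<alpha> c s
           \<le> 2 * ((b - a + \<tau>') * caputo_kernel \<alpha> c a)"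
proof -
  have g: "0 \<le> caputo_kernel \<alpha> c x" for x
    unfolding caputo_kernel_eq using assms by simp
  have "(b - a + \<tau>' - 2 * (s - (a + b)/2)) * caputo_kernel \<alpha> c s \<le> 2 * (c - s) * caputo_kernel \<alpha> c s"
    by (rule mult_right_mono[OF _ g]) (use assms(5) in \<open>simp add: field_simps\<close>)
  also have "\<dots> = 2 * ((c - s) * caputo_kernel \<alpha> c s)" by simp
  also have "\<dots> \<le> 2 * ((c - a) * caputo_kernel \<alpha> c a)"
    using caputo_kernel_mult_antimono[of \<alpha> a s c] assms by simp
  also have "\<dots> \<le> 2 * ((b - a + \<tau>') * caputo_kernel \<alpha> c a)"
    using mult_right_mono[OF _ g[of a], of "c - a" "b - a + \<tau>'"] assms by simp
  finally show ?thesis .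
qed

lemma caputo_kernel_weighted_mean_le:
  assumes "\<alpha> < 1" "a < b" "0 < \<tau>'" "b + \<tau>'/2 \<le> c" "c \<le> b + \<tau>'"
  shows "integral {a..b} (caputo_kernel \<alpha> c) / (b - a)
           - 2 * integral {a..b} (\<lambda>s. (s - (a + b)/2) * caputo_kernel \<alpha> c s) / ((b - a) * (b - a + \<tau>'))
         \<le> 2 * caputo_kernel \<alpha> c a"
proof -
  define g where "g = caputo_kernel \<alpha> c"
  define \<tau> \<sigma> where "\<tau> = b - a" and "\<sigma> = b - a + \<tau>'"
  have pos: "0 < \<tau>" "0 < \<sigma>" using assms unfolding \<tau>_def \<sigma>_def by auto
  have "continuous_on {a..b} g"
    unfolding g_def using assms
    by (intro continuous_on_subset[OF continuous_on_caputo_kernel]) auto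
  then have "((\<lambda>s. g s / \<tau> - 2 / (\<tau> * \<sigma>) * ((s - (a + b)/2) * g s)) has_integral
      (integral {a..b} g / \<tau> - 2 / (\<tau> * \<sigma>) * integral {a..b} (\<lambda>s. (s - (a + b)/2) * g s))) {a..b}"
    by (intro has_integral_diff has_integral_divide has_integral_mult_right integrable_integral
          integrable_continuous_interval continuous_intros)
  moreover have "((\<lambda>s. 2 * g a / \<tau>) has_integral (2 * g a)) {a..b}"
    using has_integral_const_real[of "2 * g a / \<tau>" a b] pos assms unfolding \<tau>_def by simp
  moreover have "g s / \<tau> - 2 / (\<tau> * \<sigma>) * ((s - (a + b)/2) * g s) \<le> 2 * g a / \<tau>"
    if "s \<in> {a..b}" for s
  proof -
    have "g s / \<tau> - 2 / (\<tau> * \<sigma>) * ((s - (a + b)/2) * g s)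
        = (\<sigma> - 2 * (s - (a + b)/2)) * g s / (\<tau> * \<sigma>)"
      using pos by (simp add: field_simps)
    also have "\<dots> \<le> 2 * (\<sigma> * g a) / (\<tau> * \<sigma>)"
      using caputo_kernel_weight_le[OF assms(1,3)] assms that pos
      unfolding g_def \<sigma>_def by (intro divide_right_mono) auto
    also have "\<dots> = 2 * g a / \<tau>" using pos by simp
    finally show ?thesis .
  qed
  ultimately have "integral {a..b} g / \<tau> - 2 / (\<tau> * \<sigma>) * integral {a..b} (\<lambda>s. (s - (a + b)/2) * g s)
      \<le> 2 * g a"
    by (rule has_integral_le)
  then show ?thesis unfolding g_def \<tau>_def \<sigma>_def by simp
qed

section \<open>The L2-1\<sigma> coefficients as kernel entries\<close>

lemma tth_eq: "tth \<alpha> t n = t (n - 1) + (1 - \<alpha>/2) * tau t n"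
  unfolding tth_def tau_def by (simp add: algebra_simps)

lemma zeta_eq_cell_moment:
  assumes "k \<le> n"
  shows "zeta \<alpha> t n (n - k) = 2 / (tau t k)^2 * cell_moment (varpi' \<alpha> t n) t k"
  using assms unfolding zeta_def cell_moment_def by simp

lemma ahat_eq:
  assumes "1 \<le> k" "k < n"
  shows "ahat \<alpha> t n (n - k) = acoef \<alpha> t n (n - k) - zeta \<alpha> t n (n - k) / (1 + ratio t (k + 1))
     + (if 2 \<le> k then zeta \<alpha> t n (n - (k - 1)) / (ratio t k * (1 + ratio t k)) else 0)"
proof (cases "k = 1")
  case True
  then show ?thesis unfolding ahat_def using assms by (simp add: numeral_2_eq_2)
next
  case False
  then have "n - k \<noteq> 0" "n - k \<noteq> n - 1" "n - (n - k) = k" "n - k + 1 = n - (k - 1)"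
    using assms by auto
  then show ?thesis unfolding ahat_def using False assms by simp
qed

locale caputo_mesh = mesh +
  fixes \<alpha> :: real
  assumes alpha: "0 \<le> \<alpha>" "\<alpha> < 1"
begin

lemma tth_bounds:
  assumes "1 \<le> n" "n \<le> N"
  shows "t (n - 1) + tau t n / 2 \<le> tth \<alpha> t n" "t (n - 1) < tth \<alpha> t n" "tth \<alpha> t n \<le> t n"
proof -
  have "0 < tau t n" using tau_pos assms by simp
  then have "tau t n / 2 \<le> (1 - \<alpha>/2) * tau t n" "0 < (1 - \<alpha>/2) * tau t n"
      "(1 - \<alpha>/2) * tau t n \<le> tau t n"
    using alpha by (auto simp: field_simps)
  then show "t (n - 1) + tau t n / 2 \<le> tth \<alpha> t n" "t (n - 1) < tth \<alpha> t n" "tth \<alpha> t n \<le> t n"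
    unfolding tth_eq by (auto simp: tau_def)
qed

lemma tth_mono:
  assumes "2 \<le> n" "n \<le> N"
  shows "tth \<alpha> t (n - 1) \<le> tth \<alpha> t n"
proof -
  have "1 \<le> n - 1" "n - 1 \<le> N" using assms by arith+
  from tth_bounds(3)[OF this] tth_bounds(2)[of n] assms show ?thesis by simp
qed

lemma t_lt_tth:
  assumes "j < n" "n \<le> N"
  shows "t j < tth \<alpha> t n"
proof -
  have "j \<le> n - 1" "n - 1 \<le> N" "1 \<le> n" using assms by arith+
  then show ?thesis using mesh_le tth_bounds(2)[of n] assms by fastforce
qed

lemma varpi'_nonneg_incr_convex:
  assumes "j < n" "n \<le> N"
  shows "nonneg_incr_convex {a..t j} (varpi' \<alpha> t n)
           (caputo_kernel' \<alpha> (tth \<alpha> t n)) (caputo_kernel'' \<alpha> (tth \<alpha> t n))"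
proof -
  have "t j < tth \<alpha> t n" using t_lt_tth assms .
  then show ?thesis
    unfolding varpi'_eq_caputo_kernel by (rule caputo_kernel_nonneg_incr_convex[OF alpha])
qed

lemma varpi'_diff_nonneg_incr_convex:
  assumes "j + 1 < n" "n \<le> N"
  shows "nonneg_incr_convex {a..t j} (\<lambda>s. varpi' \<alpha> t (n - 1) s - varpi' \<alpha> t n s)
           (\<lambda>s. caputo_kernel' \<alpha> (tth \<alpha> t (n - 1)) s - caputo_kernel' \<alpha> (tth \<alpha> t n) s)
           (\<lambda>s. caputo_kernel'' \<alpha> (tth \<alpha> t (n - 1)) s - caputo_kernel'' \<alpha> (tth \<alpha> t n) s)"
proof -
  have "t j < tth \<alpha> t (n - 1)" using t_lt_tth assms by simp
  then show ?thesis
    unfolding varpi'_eq_caputo_kernel using alpha tth_mono[of n] assms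
    by (intro caputo_kernel_diff_nonneg_incr_convex) auto
qed

lemma continuous_on_varpi': "continuous_on {..<tth \<alpha> t n} (varpi' \<alpha> t n)"
  unfolding varpi'_eq_caputo_kernel by (rule continuous_on_caputo_kernel)

lemma continuous_on_varpi'_succ:
  "2 \<le> n \<Longrightarrow> n \<le> N \<Longrightarrow> continuous_on {..<tth \<alpha> t (n - 1)} (varpi' \<alpha> t n)"
  by (rule continuous_on_subset[OF continuous_on_varpi']) (use tth_mono in auto)

lemma kern_varpi'_diff:
  assumes "j + 1 < n" "n \<le> N"
  shows "kern (\<lambda>s. varpi' \<alpha> t (n - 1) s - varpi' \<alpha> t n s) t j
           = kern (varpi' \<alpha> t (n - 1)) t j - kern (varpi' \<alpha> t n) t j"
proof -
  have "2 \<le> n" "j - 1 < n - 1" "j < n - 1" "n - 1 \<le> N" using assms by auto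
  then show ?thesis
    using kern_diff[OF continuous_on_varpi' continuous_on_varpi'_succ t_lt_tth t_lt_tth] assms by simp
qed

lemma kern_left_varpi'_diff:
  assumes "1 \<le> j" "j < n" "n \<le> N"
  shows "kern_left (\<lambda>s. varpi' \<alpha> t (n - 1) s - varpi' \<alpha> t n s) t j
           = kern_left (varpi' \<alpha> t (n - 1)) t j - kern_left (varpi' \<alpha> t n) t j"
proof -
  have "2 \<le> n" "j - 1 < n - 1" "n - 1 \<le> N" using assms by auto
  then show ?thesis
    using kern_left_diff[OF continuous_on_varpi' continuous_on_varpi'_succ t_lt_tth] assms by simp
qed

lemma kern_cell_varpi'_le:
  assumes "1 \<le> k" "k < N"
  shows "kern_cell (varpi' \<alpha> t (k + 1)) t k \<le> 2 * varpi' \<alpha> t (k + 1) (t (k - 1))"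
proof -
  have mesh: "t (k - 1) < t k" "0 < tau t (k + 1)" using mesh_less tau_pos assms by auto
  have "t k + tau t (k + 1) / 2 \<le> tth \<alpha> t (k + 1)" "tth \<alpha> t (k + 1) \<le> t k + tau t (k + 1)"
    using tth_bounds[of "k + 1"] assms by (auto simp: tau_def)
  from caputo_kernel_weighted_mean_le[OF alpha(2) mesh this] show ?thesis
    unfolding kern_cell_def cell_integral_def cell_moment_def varpi'_eq_caputo_kernel
    by (simp add: tau_def)
qed

lemma acoef_zero_eq:
  assumes "1 \<le> n" "n \<le> N"
  shows "2 * (1 - \<alpha>) / (2 - \<alpha>) * acoef \<alpha> t n 0 = varpi' \<alpha> t n (t (n - 1))"
proof -
  define c \<tau> x where "c = tth \<alpha> t n" and "\<tau> = tau t n" and "x = c - t (n - 1)"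
  have \<tau>: "0 < \<tau>" unfolding \<tau>_def using tau_pos assms by simp
  have x: "(2 - \<alpha>) * \<tau> = 2 * x" "0 < x"
    unfolding x_def c_def \<tau>_def using tth_eq[of \<alpha> t n] tth_bounds(2)[OF assms]
    by (auto simp: algebra_simps)
  have \<Gamma>: "0 < Gamma (1 - \<alpha>)" using alpha by simp
  have "acoef \<alpha> t n 0 = integral {t (n - 1)..c} (caputo_kernel \<alpha> c) / \<tau>"
    unfolding acoef_def c_def \<tau>_def varpi'_eq_caputo_kernel
    using tth_bounds(3)[OF assms] by simp
  also have "\<dots> = x powr (1 - \<alpha>) / ((1 - \<alpha>) * Gamma (1 - \<alpha>)) / \<tau>"
    unfolding x_def using integral_caputo_kernel[OF alpha(2)] tth_bounds(2)[OF assms]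
    by (simp add: c_def)
  also have "2 * (1 - \<alpha>) / (2 - \<alpha>) * \<dots>
      = 2 * x powr (1 - \<alpha>) / ((2 - \<alpha>) * \<tau> * Gamma (1 - \<alpha>))"
  proof -
    define A B G where "A = 1 - \<alpha>" and "B = 2 - \<alpha>" and "G = Gamma (1 - \<alpha>)"
    have "0 < A" "0 < B" "0 < G" using alpha \<Gamma> unfolding A_def B_def G_def by auto
    then have "2 * A / B * (X / (A * G) / \<tau>) = 2 * X / (B * \<tau> * G)" for X
      using \<tau> by (simp add: field_simps)
    then show ?thesis unfolding A_def B_def G_def .
  qed
  finally have "2 * (1 - \<alpha>) / (2 - \<alpha>) * acoef \<alpha> t n 0
      = 2 * x powr (1 - \<alpha>) / ((2 - \<alpha>) * \<tau> * Gamma (1 - \<alpha>))" .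
  also have "x powr (1 - \<alpha>) = x * x powr (- \<alpha>)"
    using x(2) by (simp add: powr_diff powr_minus_divide)
  also have "2 * (x * x powr (- \<alpha>)) / ((2 - \<alpha>) * \<tau> * Gamma (1 - \<alpha>)) = x powr (- \<alpha>) / Gamma (1 - \<alpha>)"
    unfolding x(1) using x(2) by simp
  finally show ?thesis
    unfolding varpi'_eq_caputo_kernel caputo_kernel_eq x_def c_def .
qed

lemma acoef_eq_cell_integral:
  assumes "1 \<le> k" "k < n" "n \<le> N"
  shows "acoef \<alpha> t n (n - k) = cell_integral (varpi' \<alpha> t n) t k / tau t k"
proof -
  have "t k < tth \<alpha> t n" using t_lt_tth assms by simp
  then show ?thesis
    using assms unfolding acoef_def cell_integral_def by simp
qed

lemma Akern_eq_kern:
  assumes "1 \<le> i" "i < n" "n \<le> N"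
  shows "Akern \<alpha> t n i = kern (varpi' \<alpha> t n) t (n - i)"
proof -
  define k where "k = n - i"
  have k: "1 \<le> k" "k < n" "k \<le> n" "k - 1 \<le> n" "k < N" using assms unfolding k_def by auto
  have right: "acoef \<alpha> t n (n - k) - zeta \<alpha> t n (n - k) / (1 + ratio t (k + 1))
      = kern_cell (varpi' \<alpha> t n) t k"
    unfolding acoef_eq_cell_integral[OF k(1,2) assms(3)] zeta_eq_cell_moment[OF k(3)]
      kern_cell_eq_ratio[OF k(1,5)] ..
  have left: "zeta \<alpha> t n (n - (k - 1)) / (ratio t k * (1 + ratio t k)) = kern_left (varpi' \<alpha> t n) t k"
    if "2 \<le> k"
    unfolding zeta_eq_cell_moment[OF k(4)] kern_left_eq_ratio[OF that k(5)[THEN less_imp_le]] ..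
  have "Akern \<alpha> t n i = ahat \<alpha> t n (n - k)"
    unfolding Akern_def k_def using assms by simp
  also have "\<dots> = kern (varpi' \<alpha> t n) t k"
    unfolding ahat_eq[OF k(1,2)] right kern_def using left by simp
  finally show ?thesis unfolding k_def .
qed

lemma Akern_zero_eq_kern_top:
  assumes "1 \<le> n" "n \<le> N"
  shows "Akern \<alpha> t n 0 = kern_top (varpi' \<alpha> t n) t n"
proof -
  have "zeta \<alpha> t n 1 / (ratio t n * (1 + ratio t n)) = kern_left (varpi' \<alpha> t n) t n" if "2 \<le> n"
  proof -
    have "n - (n - 1) = 1" "n - 1 \<le> n" using that by auto
    from zeta_eq_cell_moment[OF this(2), of \<alpha> t, unfolded this(1)] show ?thesis
      unfolding kern_left_eq_ratio[OF that assms(2)] by simp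
  qed
  then show ?thesis
    unfolding Akern_def ahat_def kern_top_def acoef_zero_eq[OF assms, symmetric] by simp
qed

lemma Akern_last_nonneg:
  assumes "1 \<le> n" "n \<le> N"
  shows "0 \<le> Akern \<alpha> t n (n - 1)"
proof (cases "n = 1")
  case True
  have "0 \<le> varpi' \<alpha> t 1 (t 0)"
    using nonneg_incr_convexD[OF varpi'_nonneg_incr_convex[of 0 1 "t 0"]] assms True by simp
  then show ?thesis
    using Akern_zero_eq_kern_top[of 1] assms True unfolding kern_top_def by simp
next
  case False
  then have "Akern \<alpha> t n (n - 1) = kern_cell (varpi' \<alpha> t n) t 1"
    using Akern_eq_kern[of "n - 1" n] assms unfolding kern_def by simp
  moreover have "0 \<le> kern_cell (varpi' \<alpha> t n) t 1"
    using kern_cell_nonneg[of 1] varpi'_nonneg_incr_convex[of 1 n "t 0"] False assms by simp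
  ultimately show ?thesis by simp
qed

lemma Akern_last_le:
  assumes "2 \<le> n" "n \<le> N"
  shows "Akern \<alpha> t n (n - 1) \<le> Akern \<alpha> t (n - 1) (n - 2)"
proof -
  have A: "Akern \<alpha> t n (n - 1) = kern_cell (varpi' \<alpha> t n) t 1"
    using Akern_eq_kern[of "n - 1" n] assms unfolding kern_def by simp
  show ?thesis
  proof (cases "n = 2")
    case True
    have "kern_cell (varpi' \<alpha> t 2) t 1 \<le> 2 * varpi' \<alpha> t 2 (t 0)"
      using kern_cell_varpi'_le[of 1] assms True by (simp add: numeral_2_eq_2)
    moreover have "varpi' \<alpha> t 2 (t 0) \<le> varpi' \<alpha> t 1 (t 0)"
      using nonneg_incr_convexD[OF varpi'_diff_nonneg_incr_convex[of 0 2 "t 0"]] assms True by simp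
    moreover have "Akern \<alpha> t 1 0 = 2 * varpi' \<alpha> t 1 (t 0)"
      using Akern_zero_eq_kern_top[of 1] assms unfolding kern_top_def by simp
    ultimately show ?thesis unfolding A using True by simp
  next
    case False
    let ?d = "\<lambda>s. varpi' \<alpha> t (n - 1) s - varpi' \<alpha> t n s"
    have "Akern \<alpha> t (n - 1) (n - 2) = kern_cell (varpi' \<alpha> t (n - 1)) t 1"
      using Akern_eq_kern[of "n - 2" "n - 1"] assms False unfolding kern_def by simp
    moreover have "0 \<le> kern_cell ?d t 1"
      using kern_cell_nonneg[of 1] varpi'_diff_nonneg_incr_convex[of 1 n "t 0"] False assms by simp
    moreover have "kern_cell ?d t 1 = kern_cell (varpi' \<alpha> t (n - 1)) t 1 - kern_cell (varpi' \<alpha> t n) t 1"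
      using kern_cell_diff[OF continuous_on_varpi' continuous_on_varpi'_succ t_lt_tth] False assms by simp
    ultimately show ?thesis unfolding A by simp
  qed
qed

end

locale caputo_ratio_mesh = ratio_mesh t N + caputo_mesh t N \<alpha>
  for t :: "nat \<Rightarrow> real" and N :: nat and \<alpha> :: real
begin

lemma Akern_antitone:
  assumes "1 \<le> i" "i < n" "n \<le> N"
  shows "Akern \<alpha> t n i \<le> Akern \<alpha> t n (i - 1)"
proof (cases "i = 1")
  case True
  have n: "1 \<le> n - 1" "n - 1 < N" "n - 1 < n" using assms True by auto
  have "kern (varpi' \<alpha> t n) t (n - 1) \<le> 2 * varpi' \<alpha> t n (t (n - 1))"
    using kern_le_twice[OF n(1,2) varpi'_nonneg_incr_convex[OF n(3) assms(3)]] .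
  moreover have "0 \<le> kern_left (varpi' \<alpha> t n) t n"
    using kern_left_nonneg[OF _ assms(3) varpi'_nonneg_incr_convex[OF n(3) assms(3)]] assms True
    by simp
  ultimately show ?thesis
    using Akern_eq_kern[of 1 n] Akern_zero_eq_kern_top[of n] assms True
    unfolding kern_top_def by simp
next
  case False
  define k where "k = n - i"
  have k: "1 \<le> k" "k + 1 < N" "n - (i - 1) = k + 1" using assms False unfolding k_def by auto
  have "k + 1 < n" using assms False unfolding k_def by arith
  from kern_mono[OF k(1,2) varpi'_nonneg_incr_convex[OF this assms(3)]]
  have "kern (varpi' \<alpha> t n) t k \<le> kern (varpi' \<alpha> t n) t (k + 1)" .
  then show ?thesis
    using Akern_eq_kern[of i n] Akern_eq_kern[of "i - 1" n] assms False k(3)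
    unfolding k_def by simp
qed

lemma Akern_second_difference_top:
  assumes "3 \<le> n" "n \<le> N"
  shows "Akern \<alpha> t n 1 - Akern \<alpha> t n 2 \<le> Akern \<alpha> t (n - 1) 0 - Akern \<alpha> t (n - 1) 1"
proof -
  let ?g = "varpi' \<alpha> t n" and ?g' = "varpi' \<alpha> t (n - 1)"
  let ?d = "\<lambda>s. ?g' s - ?g s"
  have n: "1 \<le> n - 2" "n - 2 < N" "n - 2 + 1 < n" "n - 1 \<le> N" "2 \<le> n - 1" "1 \<le> n - 1"
    "n - 1 < N" "n - 1 - 1 < n - 1" "n - 1 - 1 + 1 < n" "n - 1 - 1 = n - 2" "n - 1 + 1 = n"
    using assms by auto
  have "kern ?d t (n - 2) \<le> 2 * ?d (t (n - 2))"
    using kern_le_twice[OF n(1,2) varpi'_diff_nonneg_incr_convex[OF n(3) assms(2)]] .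
  moreover have "kern ?d t (n - 2) = kern ?g' t (n - 2) - kern ?g t (n - 2)"
    using kern_varpi'_diff[OF n(3) assms(2)] .
  moreover have "0 \<le> kern_left ?g' t (n - 1)"
    using kern_left_nonneg[OF n(5,4) varpi'_nonneg_incr_convex[OF n(8,4)]] .
  moreover have "0 \<le> kern_left ?d t (n - 1)"
    using kern_left_nonneg[OF n(5,4) varpi'_diff_nonneg_incr_convex[OF n(9) assms(2)]] .
  moreover have "kern_left ?d t (n - 1) = kern_left ?g' t (n - 1) - kern_left ?g t (n - 1)"
    using kern_left_varpi'_diff[OF n(6)] assms by simp
  moreover have "kern_cell ?g t (n - 1) \<le> 2 * ?g (t (n - 2))"
    using kern_cell_varpi'_le[OF n(6,7)] n(10,11) by simp
  moreover have "Akern \<alpha> t n 1 = kern_cell ?g t (n - 1) + kern_left ?g t (n - 1)"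
    using Akern_eq_kern[of 1 n] assms unfolding kern_def by simp
  moreover have "Akern \<alpha> t (n - 1) 0 = 2 * (?g' (t (n - 2)) + kern_left ?g' t (n - 1))"
    using Akern_zero_eq_kern_top[OF n(6,4)] n(5,10) unfolding kern_top_def by simp
  moreover have "Akern \<alpha> t n 2 = kern ?g t (n - 2)" "Akern \<alpha> t (n - 1) 1 = kern ?g' t (n - 2)"
    using Akern_eq_kern[of 2 n] Akern_eq_kern[of 1 "n - 1"] assms n(10) by simp_all
  ultimately show ?thesis by simp
qed

lemma Akern_second_difference:
  assumes "1 \<le> i" "i + 1 < n" "n \<le> N"
  shows "Akern \<alpha> t n i - Akern \<alpha> t n (i + 1) \<le> Akern \<alpha> t (n - 1) (i - 1) - Akern \<alpha> t (n - 1) i"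
proof (cases "i = 1")
  case True
  then show ?thesis using Akern_second_difference_top assms by (simp add: numeral_2_eq_2)
next
  case False
  let ?d = "\<lambda>s. varpi' \<alpha> t (n - 1) s - varpi' \<alpha> t n s"
  define k where "k = n - i - 1"
  have k: "1 \<le> k" "k + 1 < N" "k + 1 + 1 < n" "k + 1 < n" "n - i = k + 1" "n - (i + 1) = k"
    "n - 1 - (i - 1) = k + 1" "n - 1 - i = k"
    using assms False unfolding k_def by auto
  have "kern ?d t k \<le> kern ?d t (k + 1)"
    using kern_mono[OF k(1,2) varpi'_diff_nonneg_incr_convex[OF k(3) assms(3)]] .
  then show ?thesis
    using kern_varpi'_diff[OF k(4) assms(3)] kern_varpi'_diff[OF k(3) assms(3)]
      Akern_eq_kern[of i n] Akern_eq_kern[of "i + 1" n] Akern_eq_kern[of "i - 1" "n - 1"]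
      Akern_eq_kern[of i "n - 1"] assms False
    unfolding k(5-8) by simp
qed

end

section \<open>The energy identity\<close>

lemma abel_summation:
  fixes C w :: "nat \<Rightarrow> real"
  shows "(\<Sum>j=1..m. (C (Suc j) - C j) * (\<Sum>l=Suc j..m. w l)) + C 1 * (\<Sum>l=1..m. w l)
         = (\<Sum>k=1..m. C k * w k)"
proof (induction m)
  case (Suc m)
  have "(\<Sum>j=1..Suc m. (C (Suc j) - C j) * (\<Sum>l=Suc j..Suc m. w l))
      = (\<Sum>j=1..m. (C (Suc j) - C j) * (\<Sum>l=Suc j..Suc m. w l))" by simp
  also have "\<dots> = (\<Sum>j=1..m. (C (Suc j) - C j) * (\<Sum>l=Suc j..m. w l) + (C (Suc j) - C j) * w (Suc m))"
    by (intro sum.cong) (auto simp: algebra_simps)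
  also have "\<dots> = (\<Sum>j=1..m. (C (Suc j) - C j) * (\<Sum>l=Suc j..m. w l))
                  + (\<Sum>j=1..m. C (Suc j) - C j) * w (Suc m)"
    by (simp add: sum.distrib sum_distrib_right)
  also have "(\<Sum>j=1..m. C (Suc j) - C j) = C (Suc m) - C 1" by (rule sum_Suc_diff) simp
  finally show ?case using Suc.IH by (simp add: algebra_simps)
qed simp

definition Gsum :: "(nat \<Rightarrow> real) \<Rightarrow> nat \<Rightarrow> (nat \<Rightarrow> real) \<Rightarrow> real" where
  "Gsum A m w = (if m = 0 then 0 else
       (\<Sum>j = 1..m - 1. (A (m - j - 1) - A (m - j)) * (\<Sum>l = j + 1..m. w l)^2)
       + A (m - 1) * (\<Sum>l = 1..m. w l)^2)"

definition Rsum :: "(nat \<Rightarrow> real) \<Rightarrow> (nat \<Rightarrow> real) \<Rightarrow> nat \<Rightarrow> (nat \<Rightarrow> real) \<Rightarrow> real" where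
  "Rsum B A m w = (if m \<le> 1 then 0 else
       (\<Sum>j = 1..m - 1. (B (m - j - 2) - B (m - j - 1) - A (m - j - 1) + A (m - j))
            * (\<Sum>l = j + 1..m - 1. w l)^2)
       + (B (m - 2) - A (m - 1)) * (\<Sum>l = 1..m - 1. w l)^2)"

lemma Gfun_eq_Gsum: "Gfun \<alpha> t m w = Gsum (Akern \<alpha> t m) m w"
  unfolding Gfun_def Gsum_def ..

lemma Rfun_eq_Rsum: "Rfun \<alpha> t m w = Rsum (Akern \<alpha> t (m - 1)) (Akern \<alpha> t m) m w"
  unfolding Rfun_def Rsum_def ..

lemma Gsum_Suc:
  "Gsum A (Suc m) w = (\<Sum>j = 1..m. (A (m - j) - A (Suc m - j)) * (\<Sum>l = Suc j..Suc m. w l)^2)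
                      + A m * (\<Sum>l = 1..Suc m. w l)^2"
  unfolding Gsum_def by (auto intro!: sum.cong simp: Suc_diff_le)

lemma Gsum_tails:
  "Gsum B m w = (\<Sum>j = 1..m. (B (m - Suc j) - B (m - j)) * (\<Sum>l = Suc j..m. w l)^2)
                + B (m - 1) * (\<Sum>l = 1..m. w l)^2"
proof (cases m)
  case (Suc m')
  then have "(\<Sum>j = 1..m. (B (m - Suc j) - B (m - j)) * (\<Sum>l = Suc j..m. w l)^2)
      = (\<Sum>j = 1..m - 1. (B (m - Suc j) - B (m - j)) * (\<Sum>l = Suc j..m. w l)^2)"
    by simp
  then show ?thesis unfolding Gsum_def using Suc by (auto intro!: sum.cong simp: Suc_diff_le)
qed (simp add: Gsum_def)

lemma Rsum_Suc_tails:
  "Rsum B A (Suc m) w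
     = (\<Sum>j = 1..m. (B (m - Suc j) - B (m - j) - A (m - j) + A (Suc m - j)) * (\<Sum>l = Suc j..m. w l)^2)
       + (B (m - 1) - A m) * (\<Sum>l = 1..m. w l)^2"
proof (cases m)
  case (Suc m')
  then show ?thesis unfolding Rsum_def
    by (auto intro!: sum.cong arg_cong2[where f="(+)"] simp: Suc_diff_le numeral_2_eq_2)
qed (simp add: Rsum_def)

text \<open>By \<open>Gsum_Suc\<close>, \<open>Gsum_tails\<close> and \<open>Rsum_Suc_tails\<close>, the left-hand side compares the same
  quadratic form on tail sums with and without the last increment \<open>w (m + 1)\<close>; expanding the
  squares and summing by parts leaves the right-hand side.\<close>
lemma Gsum_Rsum_step:
  fixes A B w :: "nat \<Rightarrow> real"
  shows "Gsum A (Suc m) w - Gsum B m w + Rsum B A (Suc m) w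
       = 2 * w (Suc m) * (\<Sum>k = 1..m. A (Suc m - k) * w k) + A 0 * (w (Suc m))^2"
proof -
  define T where "T j = (\<Sum>l = j..m. w l)" for j
  define S where "S j = (\<Sum>l = j..Suc m. w l)" for j
  define c where "c j = A (m - j) - A (Suc m - j)" for j
  define x where "x = w (Suc m)"
  have ST: "S j = T j + x" if "j \<le> Suc m" for j unfolding S_def T_def x_def using that by simp
  have "Gsum A (Suc m) w - Gsum B m w + Rsum B A (Suc m) w
      = (\<Sum>j = 1..m. c j * ((S (Suc j))^2 - (T (Suc j))^2)) + A m * ((S 1)^2 - (T 1)^2)"
    unfolding Gsum_Suc Gsum_tails Rsum_Suc_tails S_def[symmetric] T_def[symmetric] c_def
    by (simp add: sum_subtractf[symmetric] sum.distrib[symmetric] algebra_simps)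
  also have "\<dots> = (\<Sum>j = 1..m. 2 * x * (c j * T (Suc j)) + x^2 * c j) + (2 * x * (A m * T 1) + x^2 * A m)"
    by (intro arg_cong2[where f="(+)"] sum.cong refl) (auto simp: ST power2_eq_square algebra_simps)
  also have "\<dots> = 2 * x * ((\<Sum>j = 1..m. c j * T (Suc j)) + A m * T 1) + x^2 * ((\<Sum>j = 1..m. c j) + A m)"
    by (simp only: sum.distrib sum_distrib_left[symmetric]) (simp add: algebra_simps)
  also have "(\<Sum>j = 1..m. c j * T (Suc j)) + A m * T 1 = (\<Sum>k = 1..m. A (Suc m - k) * w k)"
    using abel_summation[where C="\<lambda>j. A (Suc m - j)" and m=m and w=w] unfolding c_def T_def by simp
  also have "(\<Sum>j = 1..m. c j) + A m = A 0"
    using sum_Suc_diff[of 1 m "\<lambda>j. A (Suc m - j)"] unfolding c_def by simp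
  finally show ?thesis unfolding x_def by (simp add: algebra_simps)
qed

text \<open>Regrouping the scheme by the increments \<open>w k\<close>: this is where the coefficients
  \<open>ahat\<close> come from.\<close>
lemma L21_sum_regroup:
  fixes a z r w :: "nat \<Rightarrow> real"
  assumes "\<And>k. 2 \<le> k \<Longrightarrow> k \<le> Suc m \<Longrightarrow> 0 < r k"
  shows "(\<Sum>k=1..m. a k * w k + (w (k + 1) - r (k + 1) * w k) / (r (k + 1) * (1 + r (k + 1))) * z k)
       = (\<Sum>k=1..m. (a k - z k / (1 + r (k + 1))
                    + (if 2 \<le> k then z (k - 1) / (r k * (1 + r k)) else 0)) * w k)
         + (if 1 \<le> m then z m / (r (m + 1) * (1 + r (m + 1))) else 0) * w (m + 1)"
  using assms
proof (induction m)
  case (Suc m)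
  define R where "R = r (Suc m + 1)"
  have R: "0 < R" unfolding R_def using Suc.prems[of "Suc m + 1"] by simp
  have "(w (Suc m + 1) - R * w (Suc m)) / (R * (1 + R)) = w (Suc m + 1) / (R * (1 + R)) - w (Suc m) / (1 + R)"
    using R by (simp add: diff_divide_distrib)
  then have "(w (Suc m + 1) - R * w (Suc m)) / (R * (1 + R)) * z (Suc m)
      = w (Suc m + 1) * z (Suc m) / (R * (1 + R)) - w (Suc m) * z (Suc m) / (1 + R)"
    by (simp only: left_diff_distrib times_divide_eq_left)
  moreover have "(\<Sum>k=1..m. a k * w k + (w (k + 1) - r (k + 1) * w k) / (r (k + 1) * (1 + r (k + 1))) * z k)
   = (\<Sum>k=1..m. (a k - z k / (1 + r (k + 1)) + (if 2 \<le> k then z (k - 1) / (r k * (1 + r k)) else 0)) * w k)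
     + (if 1 \<le> m then z m / (r (m + 1) * (1 + r (m + 1))) else 0) * w (m + 1)"
    using Suc by auto
  ultimately show ?case
    unfolding sum.cl_ivl_Suc R_def by (cases m) (simp_all add: algebra_simps)
qed simp

context mesh
begin

lemma caputoL21_eq_ahat_sum:
  assumes "\<alpha> \<noteq> 2" "n = Suc m" "n \<le> N"
  shows "caputoL21 \<alpha> t v n = (\<Sum>k=1..m. ahat \<alpha> t n (n - k) * nabla v k)
                              + (ahat \<alpha> t n 0 + \<alpha> / (2 - \<alpha>) * acoef \<alpha> t n 0) * nabla v n"
proof -
  define Z where "Z = (if 1 \<le> m then zeta \<alpha> t n (n - m) / (ratio t (m + 1) * (1 + ratio t (m + 1))) else 0)"
  have "(\<Sum>k=1..m. acoef \<alpha> t n (n - k) * nabla v k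
          + (nabla v (k + 1) - ratio t (k + 1) * nabla v k) / (ratio t (k + 1) * (1 + ratio t (k + 1)))
            * zeta \<alpha> t n (n - k))
      = (\<Sum>k=1..m. (acoef \<alpha> t n (n - k) - zeta \<alpha> t n (n - k) / (1 + ratio t (k + 1))
           + (if 2 \<le> k then zeta \<alpha> t n (n - (k - 1)) / (ratio t k * (1 + ratio t k)) else 0)) * nabla v k)
        + Z * nabla v n"
    using L21_sum_regroup[where a="\<lambda>k. acoef \<alpha> t n (n - k)" and z="\<lambda>k. zeta \<alpha> t n (n - k)"
        and r="ratio t" and w="nabla v" and m=m] ratio_pos assms
    unfolding Z_def by simp
  also have "(\<Sum>k=1..m. (acoef \<alpha> t n (n - k) - zeta \<alpha> t n (n - k) / (1 + ratio t (k + 1))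
           + (if 2 \<le> k then zeta \<alpha> t n (n - (k - 1)) / (ratio t k * (1 + ratio t k)) else 0)) * nabla v k)
      = (\<Sum>k=1..m. ahat \<alpha> t n (n - k) * nabla v k)"
    using ahat_eq assms by (intro sum.cong refl) auto
  finally have sum: "caputoL21 \<alpha> t v n
      = acoef \<alpha> t n 0 * nabla v n + (\<Sum>k=1..m. ahat \<alpha> t n (n - k) * nabla v k) + Z * nabla v n"
    unfolding caputoL21_def using assms by simp
  have "ahat \<alpha> t n 0 = 2 * (1 - \<alpha>) / (2 - \<alpha>) * acoef \<alpha> t n 0 + Z"
    unfolding ahat_def Z_def using assms by auto
  moreover have "2 - \<alpha> \<noteq> 0" using assms(1) by simp
  then have "2 * (1 - \<alpha>) / (2 - \<alpha>) + \<alpha> / (2 - \<alpha>) = 1"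
    by (simp add: add_divide_distrib[symmetric])
  then have "acoef \<alpha> t n 0 = 2 * (1 - \<alpha>) / (2 - \<alpha>) * acoef \<alpha> t n 0 + \<alpha> / (2 - \<alpha>) * acoef \<alpha> t n 0"
    by (metis distrib_right mult_1)
  ultimately show ?thesis unfolding sum by (simp add: algebra_simps)
qed

lemma caputoL21_energy_identity:
  assumes "\<alpha> \<noteq> 2" "1 \<le> n" "n \<le> N"
  shows "2 * nabla v n * caputoL21 \<alpha> t v n
           = Gfun \<alpha> t n (nabla v) - Gfun \<alpha> t (n - 1) (nabla v) + Rfun \<alpha> t n (nabla v)
             + 2 * \<alpha> * acoef \<alpha> t n 0 / (2 - \<alpha>) * (nabla v n)^2"
proof -
  obtain m where m: "n = Suc m" using assms by (cases n) auto
  have "Gfun \<alpha> t n (nabla v) - Gfun \<alpha> t (n - 1) (nabla v) + Rfun \<alpha> t n (nabla v)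
      = 2 * nabla v n * (\<Sum>k = 1..m. Akern \<alpha> t n (n - k) * nabla v k) + Akern \<alpha> t n 0 * (nabla v n)^2"
    unfolding Gfun_eq_Gsum Rfun_eq_Rsum m using Gsum_Rsum_step by simp
  moreover have "(\<Sum>k = 1..m. Akern \<alpha> t n (n - k) * nabla v k) = (\<Sum>k = 1..m. ahat \<alpha> t n (n - k) * nabla v k)"
    by (intro sum.cong refl) (auto simp: Akern_def m)
  moreover have "Akern \<alpha> t n 0 = 2 * ahat \<alpha> t n 0" unfolding Akern_def by simp
  ultimately show ?thesis
    using caputoL21_eq_ahat_sum[OF assms(1) m assms(3)] by (simp add: algebra_simps power2_eq_square)
qed

end

section \<open>The threshold \<open>r\<^sub>*\<close>\<close>

definition rstar_radicand :: "real \<Rightarrow> real \<Rightarrow> real" where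
  "rstar_radicand \<alpha> r = 2 * (1 - \<alpha>/2) * r / (1 + \<alpha> + (1 - \<alpha>/2) * r) + r / (1 + r)"

definition rstar_eqn :: "real \<Rightarrow> real \<Rightarrow> real" where
  "rstar_eqn \<alpha> r = 2 * sqrt (rstar_radicand \<alpha> r) + 3 - 1 / (r^2 * (1 + r))"

lemma rstar_eq_The: "rstar \<alpha> = (THE r. 0 < r \<and> rstar_eqn \<alpha> r = 0)"
  unfolding rstar_def rstar_eqn_def rstar_radicand_def ..

lemma frac_self_mono:
  fixes A u v :: real
  assumes "0 < A" "0 \<le> u" "u \<le> v"
  shows "u / (A + u) \<le> v / (A + v)"
proof -
  have "u * (A + v) \<le> v * (A + u)" using assms by (simp add: algebra_simps mult_left_mono)
  then show ?thesis using assms by (simp add: divide_simps)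
qed

context
  fixes \<alpha> :: real
  assumes \<alpha>: "0 \<le> \<alpha>" "\<alpha> < 1"
begin

lemma rstar_den_pos: "0 \<le> r \<Longrightarrow> 0 < 1 + \<alpha> + (1 - \<alpha>/2) * r"
  using \<alpha> by (simp add: add_pos_nonneg)

lemma rstar_radicand_alt:
  "rstar_radicand \<alpha> r = 2 * ((1 - \<alpha>/2) * r / (1 + \<alpha> + (1 - \<alpha>/2) * r)) + r / (1 + r)"
  unfolding rstar_radicand_def by simp

lemma rstar_radicand_bounds:
  assumes "0 < r"
  shows "0 \<le> rstar_radicand \<alpha> r" "rstar_radicand \<alpha> r \<le> 3 * r / (1 + r)"
proof -
  have "(1 - \<alpha>/2) * r / (1 + \<alpha> + (1 - \<alpha>/2) * r) \<le> (1 - \<alpha>/2) * r / (1 + (1 - \<alpha>/2) * r)"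
    using \<alpha> assms rstar_den_pos[of r] by (intro divide_left_mono) (auto simp: add_pos_nonneg)
  also have "\<dots> \<le> r / (1 + r)"
    using \<alpha> assms by (intro frac_self_mono) auto
  finally have "(1 - \<alpha>/2) * r / (1 + \<alpha> + (1 - \<alpha>/2) * r) \<le> r / (1 + r)" .
  moreover have "0 \<le> (1 - \<alpha>/2) * r / (1 + \<alpha> + (1 - \<alpha>/2) * r)"
    using \<alpha> assms by simp
  ultimately show "0 \<le> rstar_radicand \<alpha> r" "rstar_radicand \<alpha> r \<le> 3 * r / (1 + r)"
    unfolding rstar_radicand_alt using assms by simp_all
qed

lemma rstar_eqn_strict_mono:
  assumes "0 < r1" "r1 < r2"
  shows "rstar_eqn \<alpha> r1 < rstar_eqn \<alpha> r2"
proof -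
  have "(1 - \<alpha>/2) * r1 / (1 + \<alpha> + (1 - \<alpha>/2) * r1) \<le> (1 - \<alpha>/2) * r2 / (1 + \<alpha> + (1 - \<alpha>/2) * r2)"
    using \<alpha> assms by (intro frac_self_mono) auto
  moreover have "r1 / (1 + r1) \<le> r2 / (1 + r2)"
    using frac_self_mono[of 1 r1 r2] assms by simp
  ultimately have "sqrt (rstar_radicand \<alpha> r1) \<le> sqrt (rstar_radicand \<alpha> r2)"
    unfolding rstar_radicand_alt by simp
  moreover have "r1^2 * (1 + r1) < r2^2 * (1 + r2)"
    using assms by (intro mult_strict_mono power_strict_mono) auto
  then have "1 / (r2^2 * (1 + r2)) < 1 / (r1^2 * (1 + r1))"
    using assms by (intro divide_strict_left_mono) auto
  ultimately show ?thesis unfolding rstar_eqn_def by linarith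
qed

lemma rstar_eqn_unique_root: "\<exists>!r. 0 < r \<and> rstar_eqn \<alpha> r = 0"
proof -
  have "rstar_eqn \<alpha> (1/10) \<le> 0"
  proof -
    have "sqrt (rstar_radicand \<alpha> (1/10)) \<le> 2"
      using rstar_radicand_bounds[of "1/10"] by (simp add: real_sqrt_le_iff real_le_lsqrt)
    then show ?thesis unfolding rstar_eqn_def by (simp add: power2_eq_square)
  qed
  moreover have "0 \<le> rstar_eqn \<alpha> 1"
    unfolding rstar_eqn_def using rstar_radicand_bounds(1)[of 1] by simp
  moreover have "continuous_on {1/10..1} (rstar_eqn \<alpha>)"
    unfolding rstar_eqn_def rstar_radicand_alt using rstar_den_pos
    by (intro continuous_intros) (auto simp: less_imp_neq[symmetric])
  ultimately obtain r where r: "1/10 \<le> r" "rstar_eqn \<alpha> r = 0"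
    using IVT'[of "rstar_eqn \<alpha>" "1/10" 0 1] by auto
  show ?thesis
  proof (rule ex1I[of _ r])
    fix y assume y: "0 < y \<and> rstar_eqn \<alpha> y = 0"
    show "y = r"
      using rstar_eqn_strict_mono[of y r] rstar_eqn_strict_mono[of r y] r y
      by (cases y r rule: linorder_cases) auto
  qed (use r in auto)
qed

lemma rstar_gt: "19/50 < rstar \<alpha>"
proof -
  have root: "0 < rstar \<alpha>" "rstar_eqn \<alpha> (rstar \<alpha>) = 0"
    using theI'[OF rstar_eqn_unique_root] unfolding rstar_eq_The by auto
  have "rstar_radicand \<alpha> (19/50) < 1"
    using rstar_radicand_bounds(2)[of "19/50"] by simp
  then have "sqrt (rstar_radicand \<alpha> (19/50)) < 1" by simp
  moreover have "5 < 1 / ((19/50)^2 * (1 + 19/50) :: real)" by (simp add: power2_eq_square)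
  ultimately have "rstar_eqn \<alpha> (19/50) < 0"
    unfolding rstar_eqn_def by linarith
  show ?thesis
  proof (rule ccontr)
    assume "\<not> 19/50 < rstar \<alpha>"
    then consider (eq) "rstar \<alpha> = 19/50" | (less) "rstar \<alpha> < 19/50" by linarith
    then show False
    proof cases
      case eq
      then show False using root(2)[unfolded eq] \<open>rstar_eqn \<alpha> (19/50) < 0\<close> by simp
    next
      case less
      then show False
        using rstar_eqn_strict_mono[OF root(1) less] root(2) \<open>rstar_eqn \<alpha> (19/50) < 0\<close> by simp
    qed
  qed
qed

end

section \<open>Nonnegativity of \<open>\<G>\<^sub>n\<close> and \<open>\<R>\<^sub>n\<close>\<close>

lemma Gsum_nonneg:
  assumes "\<And>i. 1 \<le> i \<Longrightarrow> i < m \<Longrightarrow> A i \<le> A (i - 1)" "1 \<le> m \<Longrightarrow> 0 \<le> A (m - 1)"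
  shows "0 \<le> Gsum A m w"
proof -
  have "0 \<le> (A (m - j - 1) - A (m - j)) * (\<Sum>l = j + 1..m. w l)^2" if "j \<in> {1..m - 1}" for j
  proof -
    have "1 \<le> m - j" "m - j < m" using that by auto
    from assms(1)[OF this] show ?thesis by simp
  qed
  then show ?thesis
    unfolding Gsum_def using assms(2) by (auto intro!: add_nonneg_nonneg sum_nonneg)
qed

lemma Rsum_nonneg:
  assumes "\<And>i. 1 \<le> i \<Longrightarrow> i + 1 < m \<Longrightarrow> A i - A (i + 1) \<le> B (i - 1) - B i"
    and "2 \<le> m \<Longrightarrow> A (m - 1) \<le> B (m - 2)"
  shows "0 \<le> Rsum B A m w"
proof -
  have "0 \<le> (B (m - j - 2) - B (m - j - 1) - A (m - j - 1) + A (m - j)) * (\<Sum>l = j + 1..m - 1. w l)^2"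
    if "j \<in> {1..m - 1}" for j
  proof (cases "j = m - 1")
    case False
    then have "m - j - 1 - 1 = m - j - 2" "m - j - 1 + 1 = m - j" "1 \<le> m - j - 1" "m - j - 1 + 1 < m"
      using that by auto
    then show ?thesis using assms(1)[of "m - j - 1"] by simp
  qed (use that in simp)
  then show ?thesis
    unfolding Rsum_def using assms(2) by (auto intro!: add_nonneg_nonneg sum_nonneg)
qed

context caputo_ratio_mesh
begin

lemma Gfun_nonneg:
  assumes "n \<le> N"
  shows "0 \<le> Gfun \<alpha> t n w"
  unfolding Gfun_eq_Gsum using Akern_antitone Akern_last_nonneg assms
  by (intro Gsum_nonneg) auto

lemma Rfun_nonneg:
  assumes "n \<le> N"
  shows "0 \<le> Rfun \<alpha> t n w"
  unfolding Rfun_eq_Rsum using Akern_second_difference Akern_last_le assms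
  by (intro Rsum_nonneg) auto

end

theorem theorem2p3:
  fixes \<alpha> T :: real and t v :: "nat \<Rightarrow> real" and N n :: nat
  assumes "0 < \<alpha>" "\<alpha> < 1"
    and "t 0 = 0" "\<forall>k\<in>{1..N}. t (k - 1) < t k" "t N = T"
    and "\<forall>k\<in>{2..N}. ratio t k \<ge> rstar \<alpha>"
    and "1 \<le> n" "n \<le> N"
  shows "2 * nabla v n * caputoL21 \<alpha> t v n
           = Gfun \<alpha> t n (nabla v) - Gfun \<alpha> t (n - 1) (nabla v) + Rfun \<alpha> t n (nabla v)
             + 2 * \<alpha> * acoef \<alpha> t n 0 / (2 - \<alpha>) * (nabla v n)^2
         \<and> Gfun \<alpha> t n (nabla v) \<ge> 0 \<and> Rfun \<alpha> t n (nabla v) \<ge> 0"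
proof -
  have "19/50 < rstar \<alpha>" using rstar_gt assms(1,2) by simp
  then interpret caputo_ratio_mesh t N \<alpha>
    using assms(1,2,4,6) by unfold_locales force+
  show ?thesis
    using caputoL21_energy_identity Gfun_nonneg Rfun_nonneg assms by simp
qed

end
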